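(* Let $J=(\Omega,\mathcal A,\mu)$ be a probability space, let $W:\Omega\times\Omega\to[0,1]$ be a symmetric measurable function, and let $f,g:\mathbb{R}^2\to\mathbb{R}$ be Lipschitz continuous. Then the evolution equation \[ \dot u_x=f\Big(u_x,\int_J W(x,y)\,g(u_x,u_y)\,d\mu(y)\Big),\qquad x\in J, \] defines a dynamical system (a flow defined for all $t\in\mathbb{R}$) on $L^1(J)$: for every initial condition in $L^1(J)$ there is a unique solution $t\mapsto u(t)\in L^1(J)$ defined for all $t\in\mathbb{R}$.
   Context: The equation is understood in $L^1(J)$: for every $t$ it holds for almost every $x\in J$ (the null set may depend on $t$). The pair $(J,W)$ is called a graphon. *)

theory Defs
  imports "HOL-Analysis.Analysis" "HOL-Probability.Probability"
begin

definition graphon_rhs ::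
  "'a measure \<Rightarrow> ('a \<Rightarrow> 'a \<Rightarrow> real) \<Rightarrow> (real \<times> real \<Rightarrow> real) \<Rightarrow> (real \<times> real \<Rightarrow> real)
   \<Rightarrow> ('a \<Rightarrow> real) \<Rightarrow> 'a \<Rightarrow> real" where
  "graphon_rhs M W f g v x = f (v x, \<integral>y. W x y * g (v x, v y) \<partial>M)"

definition L1_has_deriv_at ::
  "'a measure \<Rightarrow> (real \<Rightarrow> 'a \<Rightarrow> real) \<Rightarrow> ('a \<Rightarrow> real) \<Rightarrow> real \<Rightarrow> bool" where
  "L1_has_deriv_at M u w t \<longleftrightarrow>
     ((\<lambda>h. \<integral>\<^sup>+ x. ennreal \<bar>(u (t + h) x - u t x) / h - w x\<bar> \<partial>M) \<longlongrightarrow> 0) (at 0)"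

definition graphon_L1_solution ::
  "'a measure \<Rightarrow> ('a \<Rightarrow> 'a \<Rightarrow> real) \<Rightarrow> (real \<times> real \<Rightarrow> real) \<Rightarrow> (real \<times> real \<Rightarrow> real)
   \<Rightarrow> (real \<Rightarrow> 'a \<Rightarrow> real) \<Rightarrow> bool" where
  "graphon_L1_solution M W f g u \<longleftrightarrow>
     (\<forall>t. integrable M (u t)) \<and>
     (\<forall>t. L1_has_deriv_at M u (graphon_rhs M W f g (u t)) t)"

end

(*
  The right-hand side v |-> f (v, integral of W(., y) g (v, v y) dmu(y)) is a globally
  Lipschitz map of L^1(J) into itself, because 0 <= W <= 1, mu is a probability measure and
  f, g are Lipschitz. For a Lipschitz field F on L^1, a solution
  for t >= 0 is the limit of the Euler polygons with steps 2^-k: halving the step moves the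
  polygon by O(h) uniformly on [0, T], so the polygons converge in L^1, and the limit inherits
  ||u b - u a - (b - a) F (u a)|| <= C (b - a)^2, which makes it differentiable in L^1 with
  derivative F (u t). Negative times use the same construction for -F. Uniqueness is Gronwall's
  inequality for ||u t - v t||, a continuous function whose upper Dini derivative is at most
  L ||u t - v t||.
*)
theory Submission
  imports Defs
begin

section \<open>The \<open>L\<^sup>1\<close> seminorm\<close>

text \<open>The Bochner integral of a non-integrable function is \<open>0\<close>, so \<open>L1_norm\<close> is only
  meaningful for integrable \<open>v\<close>.\<close>
definition L1_norm :: "'a measure \<Rightarrow> ('a \<Rightarrow> real) \<Rightarrow> real" where
  "L1_norm M v = (\<integral>x. \<bar>v x\<bar> \<partial>M)"

lemma L1_norm_nonneg: "0 \<le> L1_norm M v"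
  unfolding L1_norm_def by simp

lemma L1_norm_cmult: "L1_norm M (\<lambda>x. c * v x) = \<bar>c\<bar> * L1_norm M v"
  unfolding L1_norm_def by (simp add: abs_mult)

lemma L1_norm_cong: "(\<And>x. x \<in> space M \<Longrightarrow> v x = w x) \<Longrightarrow> L1_norm M v = L1_norm M w"
  unfolding L1_norm_def by (intro Bochner_Integration.integral_cong) auto

lemma L1_norm_minus_commute: "L1_norm M (\<lambda>x. v x - w x) = L1_norm M (\<lambda>x. w x - v x)"
  unfolding L1_norm_def by (simp add: abs_minus_commute)

lemma L1_norm_uminus: "L1_norm M (\<lambda>x. - v x) = L1_norm M v"
  unfolding L1_norm_def by simp

lemma L1_norm_le_integral:
  assumes "integrable M w" "\<And>x. x \<in> space M \<Longrightarrow> \<bar>v x\<bar> \<le> w x"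
  shows "L1_norm M v \<le> integral\<^sup>L M w"
proof (cases "integrable M (\<lambda>x. \<bar>v x\<bar>)")
  case True
  then show ?thesis unfolding L1_norm_def using assms by (intro integral_mono) auto
next
  case False
  then have "L1_norm M v = 0" unfolding L1_norm_def by (simp add: not_integrable_integral_eq)
  moreover have "0 \<le> integral\<^sup>L M w" using assms
    by (intro integral_nonneg_AE) (auto intro!: AE_I2 order_trans[OF abs_ge_zero])
  ultimately show ?thesis by simp
qed

lemma L1_norm_triangle:
  assumes "integrable M a" "integrable M b" "\<And>x. x \<in> space M \<Longrightarrow> v x = a x + b x"
  shows "L1_norm M v \<le> L1_norm M a + L1_norm M b"
proof -
  have "L1_norm M v \<le> (\<integral>x. \<bar>a x\<bar> + \<bar>b x\<bar> \<partial>M)"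
    using assms by (intro L1_norm_le_integral) auto
  also have "\<dots> = L1_norm M a + L1_norm M b" unfolding L1_norm_def using assms by simp
  finally show ?thesis .
qed

lemma L1_norm_triangle3:
  assumes "integrable M a" "integrable M b" "integrable M c"
    "\<And>x. x \<in> space M \<Longrightarrow> v x = a x + b x + c x"
  shows "L1_norm M v \<le> L1_norm M a + L1_norm M b + L1_norm M c"
proof -
  have "L1_norm M v \<le> L1_norm M (\<lambda>x. a x + b x) + L1_norm M c"
    using assms by (intro L1_norm_triangle) auto
  also have "L1_norm M (\<lambda>x. a x + b x) \<le> L1_norm M a + L1_norm M b"
    using assms by (intro L1_norm_triangle) auto
  finally show ?thesis by simp
qed

lemma L1_norm_triangle4:
  assumes "integrable M a" "integrable M b" "integrable M c" "integrable M d"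
    "\<And>x. x \<in> space M \<Longrightarrow> v x = a x + b x + c x + d x"
  shows "L1_norm M v \<le> L1_norm M a + L1_norm M b + L1_norm M c + L1_norm M d"
proof -
  have "L1_norm M v \<le> L1_norm M (\<lambda>x. a x + b x + c x) + L1_norm M d"
    using assms by (intro L1_norm_triangle) auto
  also have "L1_norm M (\<lambda>x. a x + b x + c x) \<le> L1_norm M a + L1_norm M b + L1_norm M c"
    using assms by (intro L1_norm_triangle3) auto
  finally show ?thesis by simp
qed

lemma abs_L1_norm_diff_le:
  assumes "integrable M v" "integrable M w"
  shows "\<bar>L1_norm M v - L1_norm M w\<bar> \<le> L1_norm M (\<lambda>x. v x - w x)"
proof -
  have "L1_norm M v \<le> L1_norm M w + L1_norm M (\<lambda>x. v x - w x)"
    using assms by (intro L1_norm_triangle) auto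
  moreover have "L1_norm M w \<le> L1_norm M v + L1_norm M (\<lambda>x. w x - v x)"
    using assms by (intro L1_norm_triangle) auto
  ultimately show ?thesis by (simp add: L1_norm_minus_commute[of M w] abs_le_iff)
qed

lemma nn_integral_abs_eq_L1_norm:
  "integrable M v \<Longrightarrow> (\<integral>\<^sup>+x. ennreal \<bar>v x\<bar> \<partial>M) = ennreal (L1_norm M v)"
  unfolding L1_norm_def by (intro nn_integral_eq_integral) auto

lemma AE_zero_if_L1_norm_eq_0:
  assumes "integrable M v" "L1_norm M v = 0"
  shows "AE x in M. v x = 0"
proof -
  have "AE x in M. \<bar>v x\<bar> = 0"
    using assms unfolding L1_norm_def by (subst integral_nonneg_eq_0_iff_AE[symmetric]) auto
  then show ?thesis by auto
qed

lemma abs_diff_lim_le_suminf_tail: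
  fixes a :: "nat \<Rightarrow> real"
  assumes "summable (\<lambda>i. \<bar>a (Suc i) - a i\<bar>)"
  shows "\<bar>a k - lim a\<bar> \<le> (\<Sum>i. \<bar>a (Suc (i + k)) - a (i + k)\<bar>)"
proof -
  let ?d = "\<lambda>i. a (Suc i) - a i"
  have sd: "summable ?d" using assms by (rule summable_rabs_cancel)
  have partial: "(\<Sum>i<n. ?d i) = a n - a 0" for n by (induction n) auto
  have "(\<lambda>n. a n - a 0) \<longlonglongrightarrow> (\<Sum>i. ?d i)"
    using summable_LIMSEQ[OF sd] by (simp add: partial)
  then have "(\<lambda>n. a n - a 0 + a 0) \<longlonglongrightarrow> (\<Sum>i. ?d i) + a 0"
    by (rule tendsto_add[OF _ tendsto_const])
  then have "a \<longlonglongrightarrow> (\<Sum>i. ?d i) + a 0" by simp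
  then have "lim a = (\<Sum>i. ?d i) + a 0" by (rule limI)
  moreover have "(\<Sum>i. ?d i) = (\<Sum>i. ?d (i + k)) + (\<Sum>i<k. ?d i)"
    using sd by (rule suminf_split_initial_segment)
  ultimately have "a k - lim a = - (\<Sum>i. ?d (i + k))" by (simp add: partial)
  moreover have "\<bar>\<Sum>i. ?d (i + k)\<bar> \<le> (\<Sum>i. \<bar>?d (i + k)\<bar>)"
    using assms summable_iff_shift[of "\<lambda>i. \<bar>?d i\<bar>" k] by (intro summable_rabs) auto
  ultimately show ?thesis by simp
qed

lemma nn_integral_tail_le_geometric:
  fixes f :: "nat \<Rightarrow> 'a \<Rightarrow> real"
  assumes int: "\<And>k. integrable M (f k)"
    and step: "\<And>k. L1_norm M (\<lambda>x. f (Suc k) x - f k x) \<le> C * (1/2)^k"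
  shows "(\<integral>\<^sup>+x. (\<Sum>i. ennreal \<bar>f (Suc (i + k)) x - f (i + k) x\<bar>) \<partial>M) \<le> ennreal (2 * C * (1/2)^k)"
proof -
  have C: "0 \<le> C" using step[of 0] L1_norm_nonneg[of M] by (metis order_trans power_0 mult_1_right)
  have [measurable]: "\<And>k. f k \<in> borel_measurable M" using int by auto
  have "(\<integral>\<^sup>+x. (\<Sum>i. ennreal \<bar>f (Suc (i + k)) x - f (i + k) x\<bar>) \<partial>M)
      = (\<Sum>i. \<integral>\<^sup>+x. ennreal \<bar>f (Suc (i + k)) x - f (i + k) x\<bar> \<partial>M)"
    by (intro nn_integral_suminf) measurable
  also have "\<dots> = (\<Sum>i. ennreal (L1_norm M (\<lambda>x. f (Suc (i + k)) x - f (i + k) x)))"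
    using int by (subst nn_integral_abs_eq_L1_norm) auto
  also have "\<dots> \<le> (\<Sum>i. ennreal (C * (1/2)^(i + k)))"
    by (intro suminf_le) (auto intro!: ennreal_leI step)
  also have "\<dots> = ennreal (\<Sum>i. C * (1/2)^(i + k))"
    using C by (intro suminf_ennreal2)
      (auto simp: summable_iff_shift[where k=k, of "\<lambda>i. C * (1/2::real)^i"] intro!: summable_mult)
  also have "(\<Sum>i. C * (1/2::real)^(i + k)) = (C * (1/2)^k) * (\<Sum>i. (1/2::real)^i)"
    by (subst suminf_mult[symmetric]) (auto simp: power_add mult_ac)
  also have "\<dots> = 2 * C * (1/2)^k" using suminf_geometric[of "1/2::real"] by simp
  finally show ?thesis .
qed

text \<open>Completeness of \<open>L\<^sup>1\<close>: the pointwise limit exists a.e.\ because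
  \<open>\<Sum> |f\<^sub>k\<^sub>+\<^sub>1 - f\<^sub>k|\<close> has finite integral.\<close>
lemma L1_limit_geometric:
  fixes f :: "nat \<Rightarrow> 'a \<Rightarrow> real"
  assumes int: "\<And>k. integrable M (f k)"
    and step: "\<And>k. L1_norm M (\<lambda>x. f (Suc k) x - f k x) \<le> C * (1/2)^k"
  shows "integrable M (\<lambda>x. lim (\<lambda>i. f i x))"
    and "L1_norm M (\<lambda>x. f k x - lim (\<lambda>i. f i x)) \<le> 2 * C * (1/2)^k"
proof -
  define g where "g x = lim (\<lambda>i. f i x)" for x
  define d where "d i x = \<bar>f (Suc i) x - f i x\<bar>" for i x
  have C: "0 \<le> C" using step[of 0] L1_norm_nonneg[of M] by (metis order_trans power_0 mult_1_right)
  have [measurable]: "\<And>k. f k \<in> borel_measurable M" using int by auto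
  have [measurable]: "g \<in> borel_measurable M" unfolding g_def by measurable
  note tail = nn_integral_tail_le_geometric[OF int step, folded d_def]
  have "AE x in M. (\<Sum>i. ennreal (d (i + 0) x)) \<noteq> \<infinity>"
    using tail[of 0] by (intro nn_integral_PInf_AE) (auto simp: d_def top_unique)
  then have summ: "AE x in M. summable (\<lambda>i. d i x)"
    by eventually_elim (auto intro: summable_suminf_not_top simp: d_def)
  have dist_le: "(\<integral>\<^sup>+x. ennreal \<bar>f k x - g x\<bar> \<partial>M) \<le> ennreal (2 * C * (1/2)^k)" for k
  proof -
    have "AE x in M. ennreal \<bar>f k x - g x\<bar> \<le> (\<Sum>i. ennreal (d (i + k) x))"
      using summ
    proof eventually_elim
      case (elim x)
      then have "summable (\<lambda>i. d (i + k) x)" using summable_iff_shift[of "\<lambda>i. d i x" k] by simp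
      then have "(\<Sum>i. ennreal (d (i + k) x)) = ennreal (\<Sum>i. d (i + k) x)"
        by (intro suminf_ennreal2) (auto simp: d_def)
      moreover have "\<bar>f k x - g x\<bar> \<le> (\<Sum>i. d (i + k) x)"
        using elim unfolding g_def d_def by (intro abs_diff_lim_le_suminf_tail)
      ultimately show ?case by (simp add: ennreal_leI)
    qed
    then have "(\<integral>\<^sup>+x. ennreal \<bar>f k x - g x\<bar> \<partial>M) \<le> (\<integral>\<^sup>+x. (\<Sum>i. ennreal (d (i + k) x)) \<partial>M)"
      by (rule nn_integral_mono_AE)
    also have "\<dots> \<le> ennreal (2 * C * (1/2)^k)" using tail[of k] by (simp add: d_def)
    finally show ?thesis .
  qed
  have "integrable M (\<lambda>x. f 0 x - g x)"
    using dist_le[of 0] by (intro integrableI_bounded) (auto simp: le_less_trans)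
  from Bochner_Integration.integrable_diff[OF int[of 0] this]
  have gi: "integrable M g" by simp
  then show "integrable M (\<lambda>x. lim (\<lambda>i. f i x))" unfolding g_def .
  have "ennreal (L1_norm M (\<lambda>x. f k x - g x)) \<le> ennreal (2 * C * (1/2)^k)"
    using dist_le[of k] gi int by (simp add: nn_integral_abs_eq_L1_norm)
  then show "L1_norm M (\<lambda>x. f k x - lim (\<lambda>i. f i x)) \<le> 2 * C * (1/2)^k"
    using C unfolding g_def by (subst (asm) ennreal_le_iff) auto
qed

lemma one_plus_power_le_exp: "0 \<le> x \<Longrightarrow> (1 + x) ^ n \<le> exp (x * real n)"
proof -
  assume x: "0 \<le> x"
  have "(1 + x) ^ n \<le> exp x ^ n" using x by (intro power_mono) (auto intro: exp_ge_add_one_self)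
  also have "\<dots> = exp (x * real n)" by (simp add: exp_of_nat_mult[symmetric] mult.commute)
  finally show ?thesis .
qed

lemma le_if_le_plus_geometric:
  fixes x c D :: real
  assumes "\<And>k::nat. x \<le> c + D * (1/2)^k"
  shows "x \<le> c"
proof -
  have "(\<lambda>k. c + D * (1/2::real)^k) \<longlonglongrightarrow> c + D * 0"
    by (intro tendsto_intros) simp
  then show ?thesis using assms by (intro LIMSEQ_le_const[of _ c]) auto
qed

lemma grid_cell_bounds:
  assumes h: "0 < h" and a: "0 \<le> a" and b: "b \<le> (of_int \<lfloor>a/h\<rfloor> + 1) * h"
  shows "real (nat \<lfloor>a/h\<rfloor>) * h \<le> a" "b \<le> (real (nat \<lfloor>a/h\<rfloor>) + 1) * h"
    "a - h < real (nat \<lfloor>a/h\<rfloor>) * h" "0 \<le> real (nat \<lfloor>a/h\<rfloor>) * h"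
proof -
  have f0: "0 \<le> \<lfloor>a/h\<rfloor>" using a h by simp
  then have e: "real (nat \<lfloor>a/h\<rfloor>) = of_int \<lfloor>a/h\<rfloor>" by simp
  have "of_int \<lfloor>a/h\<rfloor> \<le> a/h" by simp
  then have "of_int \<lfloor>a/h\<rfloor> * h \<le> a" by (metis pos_le_divide_eq[OF h])
  then show "real (nat \<lfloor>a/h\<rfloor>) * h \<le> a" using e by simp
  show "b \<le> (real (nat \<lfloor>a/h\<rfloor>) + 1) * h" using b e by simp
  have "a/h < of_int \<lfloor>a/h\<rfloor> + 1" by linarith
  then have "a < (of_int \<lfloor>a/h\<rfloor> + 1) * h" by (metis pos_divide_less_eq[OF h])
  then show "a - h < real (nat \<lfloor>a/h\<rfloor>) * h" using e by (simp add: algebra_simps)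
  show "0 \<le> real (nat \<lfloor>a/h\<rfloor>) * h" using h by simp
qed

text \<open>The \<open>cell\<close> hypothesis says that no point of the grid \<open>h \<int>\<close> lies strictly between
  \<open>a\<close> and \<open>b\<close>.\<close>
lemma grid_induct:
  fixes P :: "real \<Rightarrow> real \<Rightarrow> bool"
  assumes h: "0 < h"
    and trans: "\<And>a m b. lo \<le> a \<Longrightarrow> a \<le> m \<Longrightarrow> m \<le> b \<Longrightarrow> b \<le> hi \<Longrightarrow> P a m \<Longrightarrow> P m b \<Longrightarrow> P a b"
    and cell: "\<And>a b. lo \<le> a \<Longrightarrow> a \<le> b \<Longrightarrow> b \<le> hi \<Longrightarrow> b \<le> (of_int \<lfloor>a/h\<rfloor> + 1) * h \<Longrightarrow> P a b"
    and ab: "lo \<le> a" "a \<le> b" "b \<le> hi"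
  shows "P a b"
proof -
  have "\<forall>a. nat (\<lfloor>b/h\<rfloor> - \<lfloor>a/h\<rfloor>) = n \<longrightarrow> lo \<le> a \<longrightarrow> a \<le> b \<longrightarrow> P a b" for n
  proof (induction n rule: less_induct)
    case (less n)
    show ?case
    proof (intro allI impI)
      fix a assume n: "nat (\<lfloor>b/h\<rfloor> - \<lfloor>a/h\<rfloor>) = n" and a: "lo \<le> a" "a \<le> b"
      define m where "m = (of_int \<lfloor>a/h\<rfloor> + 1) * h"
      show "P a b"
      proof (cases "b \<le> m")
        case True then show ?thesis using cell a ab m_def by auto
      next
        case False
        have "a/h < of_int \<lfloor>a/h\<rfloor> + 1" by linarith
        then have am: "a \<le> m" unfolding m_def using h by (simp add: field_simps)
        have "\<lfloor>m/h\<rfloor> = \<lfloor>a/h\<rfloor> + 1" unfolding m_def using h by simp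
        moreover have "\<lfloor>m/h\<rfloor> \<le> \<lfloor>b/h\<rfloor>" using False h by (intro floor_mono divide_right_mono) auto
        ultimately have "nat (\<lfloor>b/h\<rfloor> - \<lfloor>m/h\<rfloor>) < n" using n by linarith
        then have "P m b" using less.IH a am False by auto
        moreover have "P a m" using cell[of a m] a ab am False m_def by auto
        ultimately show ?thesis using trans[of a m b] a ab am False by auto
      qed
    qed
  qed
  then show ?thesis using ab by blast
qed

lemma nonpos_if_nonpos_on_left:
  fixes \<phi> :: "real \<Rightarrow> real"
  assumes cont: "continuous_on {a..b} \<phi>" and s: "a < s" "s \<le> b"
    and left: "\<And>r. a \<le> r \<Longrightarrow> r < s \<Longrightarrow> \<phi> r \<le> 0"
  shows "\<phi> s \<le> 0"
proof (rule field_le_epsilon)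
  fix \<eta> :: real assume "0 < \<eta>"
  then obtain d where d: "d > 0" "\<forall>r\<in>{a..b}. dist r s < d \<longrightarrow> dist (\<phi> r) (\<phi> s) < \<eta>"
    using cont s unfolding continuous_on_iff by (metis atLeastAtMost_iff less_imp_le)
  define r where "r = max a (s - d/2)"
  have r: "a \<le> r" "r < s" "r \<le> b" "dist r s < d"
    unfolding r_def using s d by (auto simp: dist_real_def)
  then have "\<bar>\<phi> r - \<phi> s\<bar> < \<eta>" using d(2) by (simp add: dist_real_def)
  then show "\<phi> s \<le> 0 + \<eta>" using left[of r] r by linarith
qed

lemma isCont_if_increment_le:
  fixes N :: "real \<Rightarrow> real"
  assumes "\<exists>\<delta>>0. \<forall>h. h \<noteq> 0 \<and> \<bar>h\<bar> < \<delta> \<longrightarrow> \<bar>N (s + h) - N s\<bar> \<le> \<bar>h\<bar> * K"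
  shows "isCont N s"
proof -
  have "eventually (\<lambda>h. norm (N (s + h) - N s) \<le> \<bar>h\<bar> * K) (at 0)"
    using assms unfolding eventually_at by auto
  moreover have "((\<lambda>h. \<bar>h\<bar> * K) \<longlongrightarrow> 0) (at 0)"
    by (auto intro!: tendsto_eq_intros)
  ultimately have "((\<lambda>h. N (s + h) - N s) \<longlongrightarrow> 0) (at 0)" by (rule Lim_null_comparison)
  then show ?thesis by (simp add: isCont_iff LIM_zero_iff)
qed

text \<open>Real induction: the set of times up to which \<open>\<phi> \<le> 0\<close> holds is closed by continuity,
  and the hypothesis pushes it beyond its supremum unless that is \<open>b\<close>.\<close>
lemma nonpos_by_right_continuation:
  fixes \<phi> :: "real \<Rightarrow> real"
  assumes cont: "continuous_on {a..b} \<phi>" and start: "\<phi> a \<le> 0"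
    and step: "\<And>s. a \<le> s \<Longrightarrow> s < b \<Longrightarrow> \<phi> s \<le> 0 \<Longrightarrow> \<exists>d>0. \<forall>h. 0 < h \<and> h < d \<longrightarrow> \<phi> (s + h) \<le> 0"
    and t: "a \<le> t" "t \<le> b"
  shows "\<phi> t \<le> 0"
proof -
  define S where "S = {t. a \<le> t \<and> t \<le> b \<and> (\<forall>r. a \<le> r \<and> r \<le> t \<longrightarrow> \<phi> r \<le> 0)}"
  have aS: "a \<in> S" unfolding S_def using t start by auto
  have bdd: "bdd_above S" unfolding S_def by (auto intro: bdd_aboveI[of _ b])
  define s where "s = Sup S"
  have as: "a \<le> s" unfolding s_def using aS bdd by (rule cSup_upper)
  have sb: "s \<le> b" unfolding s_def using aS by (intro cSup_least) (auto simp: S_def)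
  have below: "\<phi> r \<le> 0" if "a \<le> r" "r < s" for r
  proof -
    obtain t where "t \<in> S" "r < t"
      using \<open>r < s\<close> less_cSup_iff[OF _ bdd] aS unfolding s_def by blast
    then show ?thesis using that unfolding S_def by auto
  qed
  have "\<phi> s \<le> 0"
  proof (cases "s = a")
    case True then show ?thesis using start by simp
  next
    case False
    with as have "a < s" by simp
    from nonpos_if_nonpos_on_left[OF cont this sb below] show ?thesis .
  qed
  then have sS: "s \<in> S" unfolding S_def using as sb below by (auto simp: le_less)
  have "s = b"
  proof (rule ccontr)
    assume "s \<noteq> b"
    then have lt: "s < b" using sb by simp
    obtain d where d: "d > 0" "\<forall>h. 0 < h \<and> h < d \<longrightarrow> \<phi> (s + h) \<le> 0"
      using step[OF as lt] \<open>\<phi> s \<le> 0\<close> by blast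
    define s' where "s' = min (s + d/2) b"
    have "s' \<in> S" unfolding S_def
    proof (intro CollectI conjI allI impI)
      show "a \<le> s'" "s' \<le> b" unfolding s'_def using as lt d by auto
    next
      fix r assume r: "a \<le> r \<and> r \<le> s'"
      show "\<phi> r \<le> 0"
      proof (cases "r \<le> s")
        case True then show ?thesis using sS r unfolding S_def by auto
      next
        case False
        then show ?thesis using d(2)[rule_format, of "r - s"] r d unfolding s'_def by auto
      qed
    qed
    then have "s' \<le> s" unfolding s_def using bdd by (rule cSup_upper)
    then show False unfolding s'_def using lt d by auto
  qed
  then show ?thesis using sS t unfolding S_def by auto
qed

text \<open>Comparison with \<open>e exp ((L+1) t)\<close> for every \<open>e > 0\<close>.\<close>
lemma gronwall_dini_nonpos:
  fixes w :: "real \<Rightarrow> real"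
  assumes L: "0 \<le> L" and w0: "w 0 = 0" and cont: "continuous_on {0..} w"
    and step: "\<And>t e. 0 \<le> t \<Longrightarrow> 0 < e \<Longrightarrow> \<exists>d>0. \<forall>h. 0 < h \<and> h < d \<longrightarrow> w (t+h) \<le> w t * (1 + h*L) + h*e"
    and t0: "0 \<le> t0"
  shows "w t0 \<le> 0"
proof -
  have bound: "w t0 \<le> e * exp ((L+1) * t0)" if e: "0 < e" for e
  proof -
    define b where "b r = e * exp ((L+1) * r)" for r
    have e_le_b: "e \<le> b r" if "0 \<le> r" for r
      unfolding b_def using e that L by simp
    have "w t0 - b t0 \<le> 0"
    proof (rule nonpos_by_right_continuation[where \<phi> = "\<lambda>r. w r - b r"])
      show "continuous_on {0..t0} (\<lambda>r. w r - b r)"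
        unfolding b_def using cont by (intro continuous_intros) (auto elim: continuous_on_subset)
      show "w 0 - b 0 \<le> 0" using w0 e_le_b[of 0] e by simp
      fix s assume s: "0 \<le> s" and ws: "w s - b s \<le> 0"
      obtain d where d: "d > 0" "\<forall>h. 0 < h \<and> h < d \<longrightarrow> w (s+h) \<le> w s * (1 + h*L) + h*e"
        using step[OF s e] by blast
      have "w (s+h) \<le> b (s+h)" if h: "0 < h" "h < d" for h
      proof -
        have "w (s+h) \<le> w s * (1 + h*L) + h*e" using d h by auto
        also have "\<dots> \<le> b s * (1 + h*L) + h * b s"
          using ws h L e_le_b[OF s] by (intro add_mono mult_right_mono mult_left_mono) auto
        also have "\<dots> = b s * (1 + h*(L+1))" by (simp add: algebra_simps)
        also have "\<dots> \<le> b s * exp (h*(L+1))"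
          using e_le_b[OF s] e by (intro mult_left_mono) (auto intro: exp_ge_add_one_self)
        also have "\<dots> = b (s+h)" unfolding b_def by (simp add: algebra_simps exp_add)
        finally show ?thesis .
      qed
      then show "\<exists>d>0. \<forall>h. 0 < h \<and> h < d \<longrightarrow> w (s + h) - b (s + h) \<le> 0" using d(1) by auto
    qed (use t0 in auto)
    then show ?thesis unfolding b_def by simp
  qed
  show ?thesis
  proof (rule field_le_epsilon)
    fix e :: real assume "0 < e"
    then have "w t0 \<le> e / exp ((L+1) * t0) * exp ((L+1) * t0)" by (intro bound) simp
    then show "w t0 \<le> 0 + e" by simp
  qed
qed

section \<open>Euler polygons of a Lipschitz vector field on \<open>L\<^sup>1\<close>\<close>

locale L1_lipschitz_field =
  fixes M :: "'a measure" and F :: "('a \<Rightarrow> real) \<Rightarrow> 'a \<Rightarrow> real" and L :: real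
  assumes integrable_F: "integrable M v \<Longrightarrow> integrable M (F v)"
    and lipschitz_F: "integrable M v \<Longrightarrow> integrable M w \<Longrightarrow>
        L1_norm M (\<lambda>x. F v x - F w x) \<le> L * L1_norm M (\<lambda>x. v x - w x)"
    and L_nonneg: "0 \<le> L"
begin

lemma L1_lipschitz_field_uminus: "L1_lipschitz_field M (\<lambda>v x. - F v x) L"
proof
  fix v w :: "'a \<Rightarrow> real" assume vw: "integrable M v" "integrable M w"
  have "L1_norm M (\<lambda>x. - F v x - - F w x) = L1_norm M (\<lambda>x. F w x - F v x)" by (intro L1_norm_cong) simp
  also have "\<dots> \<le> L * L1_norm M (\<lambda>x. v x - w x)"
    using lipschitz_F[OF vw(2,1)] by (simp add: L1_norm_minus_commute[of M w])
  finally show "L1_norm M (\<lambda>x. - F v x - - F w x) \<le> L * L1_norm M (\<lambda>x. v x - w x)" .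
qed (use integrable_F L_nonneg in auto)

fun euler :: "('a \<Rightarrow> real) \<Rightarrow> real \<Rightarrow> nat \<Rightarrow> 'a \<Rightarrow> real" where
  "euler v h 0 = v"
| "euler v h (Suc j) = (\<lambda>x. euler v h j x + h * F (euler v h j) x)"

definition euler_polygon :: "('a \<Rightarrow> real) \<Rightarrow> real \<Rightarrow> real \<Rightarrow> 'a \<Rightarrow> real" where
  "euler_polygon v h t =
     (\<lambda>x. euler v h (nat \<lfloor>t/h\<rfloor>) x + (t - real (nat \<lfloor>t/h\<rfloor>) * h) * F (euler v h (nat \<lfloor>t/h\<rfloor>)) x)"

text \<open>The pointwise limit exists only almost everywhere; elsewhere \<open>lim\<close> is an arbitrary value.\<close>
definition euler_flow :: "('a \<Rightarrow> real) \<Rightarrow> real \<Rightarrow> 'a \<Rightarrow> real" where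
  "euler_flow v t = (\<lambda>x. lim (\<lambda>k. euler_polygon v ((1/2)^k) t x))"

definition F0 :: real where "F0 = L1_norm M (F (\<lambda>x. 0))"

lemma F0_nonneg: "0 \<le> F0" unfolding F0_def by (rule L1_norm_nonneg)

lemma F_norm_le:
  assumes "integrable M y" shows "L1_norm M (F y) \<le> F0 + L * L1_norm M y"
proof -
  have i0: "integrable M (\<lambda>x::'a. 0::real)" by simp
  have "L1_norm M (F y) \<le> L1_norm M (\<lambda>x. F y x - F (\<lambda>x. 0) x) + L1_norm M (F (\<lambda>x. 0))"
    using assms integrable_F[OF assms] integrable_F[OF i0] by (intro L1_norm_triangle) auto
  also have "\<dots> \<le> L * L1_norm M (\<lambda>x. y x - 0) + F0"
    unfolding F0_def using lipschitz_F[OF assms i0] by simp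
  finally show ?thesis by simp
qed

lemma lipschitz_F_cmult: "integrable M v \<Longrightarrow> integrable M w \<Longrightarrow>
        L1_norm M (\<lambda>x. c * (F v x - F w x)) \<le> \<bar>c\<bar> * (L * L1_norm M (\<lambda>x. v x - w x))"
  using lipschitz_F[of v w] by (simp add: L1_norm_cmult mult_left_mono)

context
  fixes v :: "'a \<Rightarrow> real" assumes v: "integrable M v"
begin

lemma euler_integrable: "integrable M (euler v h j)"
  by (induction j) (auto simp: v integrable_F)

lemma euler_polygon_integrable: "integrable M (euler_polygon v h t)"
  unfolding euler_polygon_def using euler_integrable integrable_F by auto

lemma euler_norm_le:
  assumes h: "0 < h"
  shows "L1_norm M (euler v h j) \<le> (L1_norm M v + real j * h * F0) * (1 + h*L)^j"
proof (induction j)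
  case 0 then show ?case by simp
next
  case (Suc j)
  let ?y = "euler v h j"
  let ?q = "1 + h*L"
  have q1: "1 \<le> ?q" using h L_nonneg by simp
  have "L1_norm M (euler v h (Suc j)) \<le> L1_norm M ?y + L1_norm M (\<lambda>x. h * F ?y x)"
    using euler_integrable integrable_F by (intro L1_norm_triangle) auto
  also have "L1_norm M (\<lambda>x. h * F ?y x) \<le> h * (F0 + L * L1_norm M ?y)"
    using h F_norm_le[OF euler_integrable] by (simp add: L1_norm_cmult)
  finally have "L1_norm M (euler v h (Suc j)) \<le> L1_norm M ?y * ?q + h * F0"
    by (simp add: algebra_simps)
  also have "\<dots> \<le> (L1_norm M v + real j * h * F0) * ?q^j * ?q + h * F0"
    using Suc q1 F0_nonneg by (intro add_mono mult_right_mono) auto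
  also have "\<dots> \<le> (L1_norm M v + real j * h * F0) * ?q^Suc j + h * F0 * ?q^Suc j"
    using mult_left_mono[OF one_le_power[OF q1, of "Suc j"], of "h*F0"] h F0_nonneg by (simp add: mult_ac)
  also have "\<dots> = (L1_norm M v + real (Suc j) * h * F0) * ?q^Suc j" by (simp add: algebra_simps)
  finally show ?case .
qed

definition radius :: "real \<Rightarrow> real" where "radius T = (L1_norm M v + T * F0) * exp (L * T)"
definition speed :: "real \<Rightarrow> real" where "speed T = F0 + L * radius T"
definition halving_const :: "real \<Rightarrow> real" where
  "halving_const T = 2 * speed T + T * L * speed T * exp (L*T) / 4"

lemma radius_nonneg: "0 \<le> T \<Longrightarrow> 0 \<le> radius T"
  unfolding radius_def using F0_nonneg L1_norm_nonneg[of M v] by simp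

lemma speed_nonneg: "0 \<le> T \<Longrightarrow> 0 \<le> speed T"
  unfolding speed_def using F0_nonneg radius_nonneg L_nonneg by simp

lemma growth_factor_le_exp:
  assumes "0 < h" "real j * h \<le> T"
  shows "(1 + h*L)^j \<le> exp (L * T)"
proof -
  have "(1 + h*L)^j \<le> exp (h * L * real j)" using assms L_nonneg by (intro one_plus_power_le_exp) simp
  also have "\<dots> \<le> exp (L * T)" using assms L_nonneg by (simp add: mult_ac mult_left_mono)
  finally show ?thesis .
qed

lemma euler_norm_le_radius:
  assumes h: "0 < h" and jT: "real j * h \<le> T"
  shows "L1_norm M (euler v h j) \<le> radius T"
proof -
  have T: "0 \<le> T" using jT h by (metis of_nat_0_le_iff order_trans zero_le_mult_iff less_imp_le)
  have "L1_norm M (euler v h j) \<le> (L1_norm M v + real j * h * F0) * (1 + h*L)^j" by (rule euler_norm_le[OF h])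
  also have "\<dots> \<le> (L1_norm M v + T * F0) * exp (L * T)"
    using jT F0_nonneg L1_norm_nonneg[of M v] T h L_nonneg growth_factor_le_exp[OF h jT]
    by (intro mult_mono add_left_mono mult_right_mono) auto
  finally show ?thesis unfolding radius_def .
qed

lemma F_euler_norm_le_speed:
  assumes h: "0 < h" and jT: "real j * h \<le> T"
  shows "L1_norm M (F (euler v h j)) \<le> speed T"
proof -
  have "L1_norm M (F (euler v h j)) \<le> F0 + L * L1_norm M (euler v h j)"
    by (rule F_norm_le[OF euler_integrable])
  also have "\<dots> \<le> speed T"
    unfolding speed_def using euler_norm_le_radius[OF h jT] L_nonneg by (simp add: mult_left_mono)
  finally show ?thesis .
qed

lemma euler_polygon_grid:
  assumes h: "0 < h" shows "euler_polygon v h (real j * h) = euler v h j"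
  unfolding euler_polygon_def using h by simp

lemma euler_polygon_cell:
  assumes h: "0 < h" and s: "real j * h \<le> s" "s \<le> (real j + 1) * h"
  shows "euler_polygon v h s = (\<lambda>x. euler v h j x + (s - real j * h) * F (euler v h j) x)"
proof (cases "s < (real j + 1) * h")
  case True
  have "\<lfloor>s/h\<rfloor> = int j" using s True h by (simp add: floor_eq_iff field_simps)
  then show ?thesis unfolding euler_polygon_def by simp
next
  case False
  then have "s = real (Suc j) * h" using s by simp
  then show ?thesis using euler_polygon_grid[OF h, of "Suc j"] by (auto simp: algebra_simps)
qed

lemma euler_polygon_lipschitz:
  assumes h: "0 < h" and ab: "0 \<le> a" "a \<le> b" "b \<le> T"
  shows "L1_norm M (\<lambda>x. euler_polygon v h b x - euler_polygon v h a x) \<le> speed T * (b - a)"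
proof (rule grid_induct[OF h, where lo=0 and hi=T and
    P="\<lambda>a b. L1_norm M (\<lambda>x. euler_polygon v h b x - euler_polygon v h a x) \<le> speed T * (b - a)"])
  fix a m b
  assume "0 \<le> a" "a \<le> m" "m \<le> b" "b \<le> T"
    and "L1_norm M (\<lambda>x. euler_polygon v h m x - euler_polygon v h a x) \<le> speed T * (m - a)"
    and "L1_norm M (\<lambda>x. euler_polygon v h b x - euler_polygon v h m x) \<le> speed T * (b - m)"
  moreover have "L1_norm M (\<lambda>x. euler_polygon v h b x - euler_polygon v h a x) \<le>
      L1_norm M (\<lambda>x. euler_polygon v h b x - euler_polygon v h m x)
      + L1_norm M (\<lambda>x. euler_polygon v h m x - euler_polygon v h a x)"
    using euler_polygon_integrable by (intro L1_norm_triangle) auto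
  ultimately show "L1_norm M (\<lambda>x. euler_polygon v h b x - euler_polygon v h a x) \<le> speed T * (b - a)"
    by (simp add: algebra_simps)
next
  fix a b assume a: "0 \<le> a" "a \<le> b" "b \<le> T" "b \<le> (of_int \<lfloor>a/h\<rfloor> + 1) * h"
  define j where "j = nat \<lfloor>a/h\<rfloor>"
  note cell = grid_cell_bounds[OF h a(1) a(4), folded j_def]
  have "L1_norm M (\<lambda>x. euler_polygon v h b x - euler_polygon v h a x)
      = L1_norm M (\<lambda>x. (b - a) * F (euler v h j) x)"
    using euler_polygon_cell[OF h, of j a] euler_polygon_cell[OF h, of j b] cell a
    by (intro L1_norm_cong) (auto simp: algebra_simps)
  also have "\<dots> = (b - a) * L1_norm M (F (euler v h j))" using a by (simp add: L1_norm_cmult)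
  also have "\<dots> \<le> (b - a) * speed T" using a cell by (intro mult_left_mono F_euler_norm_le_speed[OF h]) auto
  finally show "L1_norm M (\<lambda>x. euler_polygon v h b x - euler_polygon v h a x) \<le> speed T * (b - a)"
    by (simp add: mult_ac)
qed (use ab in auto)

lemma euler_polygon_lipschitz_abs:
  assumes h: "0 < h" and ab: "0 \<le> a" "a \<le> T" "0 \<le> b" "b \<le> T"
  shows "L1_norm M (\<lambda>x. euler_polygon v h b x - euler_polygon v h a x) \<le> speed T * \<bar>b - a\<bar>"
proof (cases "a \<le> b")
  case True then show ?thesis using euler_polygon_lipschitz[OF h, of a b T] ab by simp
next
  case False then show ?thesis
    using euler_polygon_lipschitz[OF h, of b a T] ab L1_norm_minus_commute[of M "euler_polygon v h b"] by simp
qed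

text \<open>On each grid cell the polygon moves with the constant velocity \<open>F\<close> at the last grid
  point, which is within \<open>b - a + h\<close> (in time) of \<open>a\<close>.\<close>
lemma euler_polygon_increment:
  assumes h: "0 < h" and ab: "0 \<le> a" "a \<le> b" "b \<le> T"
  shows "L1_norm M (\<lambda>x. euler_polygon v h b x - euler_polygon v h a x - (b - a) * F (euler_polygon v h a) x)
          \<le> (b - a) * (L * speed T * (b - a + h))"
proof (rule grid_induct[OF h, where lo=a and hi=b and P="\<lambda>a' b'.
    L1_norm M (\<lambda>x. euler_polygon v h b' x - euler_polygon v h a' x - (b' - a') * F (euler_polygon v h a) x)
      \<le> (b' - a') * (L * speed T * (b - a + h))"])
  fix a' m b'
  assume "a \<le> a'" "a' \<le> m" "m \<le> b'" "b' \<le> b"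
    and "L1_norm M (\<lambda>x. euler_polygon v h m x - euler_polygon v h a' x - (m - a') * F (euler_polygon v h a) x)
      \<le> (m - a') * (L * speed T * (b - a + h))"
    and "L1_norm M (\<lambda>x. euler_polygon v h b' x - euler_polygon v h m x - (b' - m) * F (euler_polygon v h a) x)
      \<le> (b' - m) * (L * speed T * (b - a + h))"
  moreover have "L1_norm M (\<lambda>x. euler_polygon v h b' x - euler_polygon v h a' x - (b' - a') * F (euler_polygon v h a) x)
      \<le> L1_norm M (\<lambda>x. euler_polygon v h b' x - euler_polygon v h m x - (b' - m) * F (euler_polygon v h a) x)
      + L1_norm M (\<lambda>x. euler_polygon v h m x - euler_polygon v h a' x - (m - a') * F (euler_polygon v h a) x)"
    using euler_polygon_integrable integrable_F[OF euler_polygon_integrable]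
    by (intro L1_norm_triangle) (auto simp: algebra_simps)
  ultimately show "L1_norm M (\<lambda>x. euler_polygon v h b' x - euler_polygon v h a' x - (b' - a') * F (euler_polygon v h a) x)
      \<le> (b' - a') * (L * speed T * (b - a + h))"
    by (simp add: algebra_simps)
next
  fix a' b' assume a': "a \<le> a'" "a' \<le> b'" "b' \<le> b" "b' \<le> (of_int \<lfloor>a'/h\<rfloor> + 1) * h"
  define j where "j = nat \<lfloor>a'/h\<rfloor>"
  note cell = grid_cell_bounds[OF h _ a'(4), folded j_def]
  have a'0: "0 \<le> a'" using a' ab by simp
  have "L1_norm M (\<lambda>x. euler_polygon v h b' x - euler_polygon v h a' x - (b' - a') * F (euler_polygon v h a) x)
      = L1_norm M (\<lambda>x. (b' - a') * (F (euler v h j) x - F (euler_polygon v h a) x))"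
    using euler_polygon_cell[OF h, of j a'] euler_polygon_cell[OF h, of j b'] cell[OF a'0] a'
    by (intro L1_norm_cong) (auto simp: algebra_simps)
  also have "\<dots> \<le> (b' - a') * (L * L1_norm M (\<lambda>x. euler_polygon v h (real j * h) x - euler_polygon v h a x))"
    using lipschitz_F_cmult[OF euler_integrable euler_polygon_integrable, of "b' - a'" h j h a] a'
    by (simp add: euler_polygon_grid[OF h])
  also have "\<dots> \<le> (b' - a') * (L * (speed T * (b - a + h)))"
  proof -
    have "L1_norm M (\<lambda>x. euler_polygon v h (real j * h) x - euler_polygon v h a x) \<le> speed T * \<bar>real j * h - a\<bar>"
      using cell[OF a'0] a' ab by (intro euler_polygon_lipschitz_abs[OF h]) auto
    also have "\<dots> \<le> speed T * (b - a + h)"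
      using cell[OF a'0] a' ab speed_nonneg[of T] by (intro mult_left_mono) auto
    finally show ?thesis using a' L_nonneg by (intro mult_left_mono) auto
  qed
  finally show "L1_norm M (\<lambda>x. euler_polygon v h b' x - euler_polygon v h a' x - (b' - a') * F (euler_polygon v h a) x)
      \<le> (b' - a') * (L * speed T * (b - a + h))"
    by (simp add: mult_ac)
qed (use ab in auto)

lemma euler_halving_step:
  assumes h: "0 < h" and jT: "real j * h \<le> T"
  shows "L1_norm M (\<lambda>x. euler v h (Suc j) x - euler v (h/2) (2 * Suc j) x)
    \<le> L1_norm M (\<lambda>x. euler v h j x - euler v (h/2) (2*j) x) * (1 + h*L) + h^2 * L * speed T / 4"
proof -
  define y where "y = euler v h j"
  define z where "z = euler v (h/2) (2*j)"
  define z' where "z' = euler v (h/2) (Suc (2*j))"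
  define e where "e = L1_norm M (\<lambda>x. y x - z x)"
  have yi: "integrable M y" and zi: "integrable M z" and z'i: "integrable M z'"
    unfolding y_def z_def z'_def by (rule euler_integrable)+
  have Fz: "L1_norm M (F z) \<le> speed T"
    unfolding z_def using F_euler_norm_le_speed[of "h/2" "2*j" T] h jT by simp
  have "L1_norm M (\<lambda>x. euler v h (Suc j) x - euler v (h/2) (2 * Suc j) x)
     \<le> e + L1_norm M (\<lambda>x. h/2 * (F y x - F z x)) + L1_norm M (\<lambda>x. h/2 * (F y x - F z' x))"
    unfolding e_def using yi zi z'i integrable_F[OF yi] integrable_F[OF zi] integrable_F[OF z'i]
    by (intro L1_norm_triangle3) (auto simp: y_def z_def z'_def numeral_2_eq_2 algebra_simps)
  also have "L1_norm M (\<lambda>x. h/2 * (F y x - F z x)) \<le> h/2 * (L * e)"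
    using lipschitz_F_cmult[OF yi zi, of "h/2"] h unfolding e_def by simp
  also have "L1_norm M (\<lambda>x. h/2 * (F y x - F z' x)) \<le> h/2 * (L * L1_norm M (\<lambda>x. y x - z' x))"
    using lipschitz_F_cmult[OF yi z'i, of "h/2"] h by simp
  also have "L1_norm M (\<lambda>x. y x - z' x) \<le> e + h/2 * speed T"
  proof -
    have "L1_norm M (\<lambda>x. y x - z' x) \<le> e + L1_norm M (\<lambda>x. (- (h/2)) * F z x)"
      unfolding e_def using yi zi integrable_F[OF zi] by (intro L1_norm_triangle) (auto simp: z_def z'_def)
    also have "L1_norm M (\<lambda>x. (- (h/2)) * F z x) \<le> h/2 * speed T"
      using L1_norm_cmult[of M "- (h/2)" "F z"] Fz h by simp
    finally show ?thesis by simp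
  qed
  finally have "L1_norm M (\<lambda>x. euler v h (Suc j) x - euler v (h/2) (2 * Suc j) x)
      \<le> e + h/2 * (L * e) + h/2 * (L * (e + h/2 * speed T))"
    using h L_nonneg by (simp add: mult_left_mono)
  also have "\<dots> = e * (1 + h*L) + h^2 * L * speed T / 4" by (simp add: algebra_simps power2_eq_square)
  finally show ?thesis unfolding e_def y_def z_def .
qed

lemma euler_halving:
  assumes h: "0 < h"
  shows "real j * h \<le> T \<Longrightarrow> L1_norm M (\<lambda>x. euler v h j x - euler v (h/2) (2*j) x)
          \<le> real j * (h^2 * L * speed T / 4) * (1 + h*L)^j"
proof (induction j)
  case 0 then show ?case by (simp add: L1_norm_def)
next
  case (Suc j)
  let ?q = "1 + h*L"
  let ?c = "h^2 * L * speed T / 4"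
  have jT: "real j * h \<le> T" using Suc.prems h by (simp add: algebra_simps)
  have T: "0 \<le> T" using jT h by (metis of_nat_0_le_iff order_trans zero_le_mult_iff less_imp_le)
  have c: "0 \<le> ?c" using h L_nonneg speed_nonneg[OF T] by simp
  have q: "1 \<le> ?q" using h L_nonneg by simp
  have "L1_norm M (\<lambda>x. euler v h (Suc j) x - euler v (h/2) (2 * Suc j) x)
      \<le> L1_norm M (\<lambda>x. euler v h j x - euler v (h/2) (2*j) x) * ?q + ?c"
    by (rule euler_halving_step[OF h jT])
  also have "\<dots> \<le> real j * ?c * ?q^j * ?q + ?c * ?q^Suc j"
    using Suc.IH[OF jT] q c mult_left_mono[OF one_le_power[OF q, of "Suc j"] c]
    by (intro add_mono mult_right_mono) auto
  also have "\<dots> = real j * ?c * ?q^Suc j + ?c * ?q^Suc j" by (simp add: mult_ac)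
  also have "\<dots> = real (Suc j) * ?c * ?q^Suc j" by (simp only: of_nat_Suc distrib_right mult_1)
  finally show ?case .
qed

lemma euler_halving_le:
  assumes h: "0 < h" and jT: "real j * h \<le> T"
  shows "L1_norm M (\<lambda>x. euler v h j x - euler v (h/2) (2*j) x) \<le> h * (T * L * speed T * exp (L*T) / 4)"
proof -
  have T: "0 \<le> T" using jT h by (metis of_nat_0_le_iff order_trans zero_le_mult_iff less_imp_le)
  have "L1_norm M (\<lambda>x. euler v h j x - euler v (h/2) (2*j) x) \<le> real j * (h^2 * L * speed T / 4) * (1 + h*L)^j"
    by (rule euler_halving[OF h jT])
  also have "\<dots> = h * ((real j * h) * (L * speed T / 4) * (1 + h*L)^j)"
    by (simp add: power2_eq_square mult_ac)
  also have "\<dots> \<le> h * (T * (L * speed T / 4) * exp (L*T))"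
    using h jT T L_nonneg speed_nonneg[OF T] growth_factor_le_exp[OF h jT]
    by (intro mult_left_mono mult_mono) auto
  finally show ?thesis by (simp add: mult_ac)
qed

lemma euler_polygon_halving:
  assumes h: "0 < h" and t: "0 \<le> t" "t \<le> T"
  shows "L1_norm M (\<lambda>x. euler_polygon v (h/2) t x - euler_polygon v h t x) \<le> h * halving_const T"
proof -
  define j where "j = nat \<lfloor>t/h\<rfloor>"
  define s where "s = real j * h"
  have "t/h < of_int \<lfloor>t/h\<rfloor> + 1" by linarith
  then have "t \<le> (of_int \<lfloor>t/h\<rfloor> + 1) * h" by (metis pos_divide_less_eq[OF h] less_imp_le)
  note cell = grid_cell_bounds[OF h t(1) this, folded j_def, folded s_def]
  have T: "0 \<le> T" using t by simp
  have grid: "euler_polygon v h s = euler v h j" "euler_polygon v (h/2) s = euler v (h/2) (2*j)"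
    using euler_polygon_grid[OF h, of j] euler_polygon_grid[of "h/2" "2*j"] h
    unfolding s_def by (simp_all add: algebra_simps)
  have "L1_norm M (\<lambda>x. euler_polygon v (h/2) t x - euler_polygon v h t x) \<le>
      L1_norm M (\<lambda>x. euler_polygon v (h/2) t x - euler_polygon v (h/2) s x)
      + L1_norm M (\<lambda>x. euler v (h/2) (2*j) x - euler v h j x)
      + L1_norm M (\<lambda>x. euler_polygon v h s x - euler_polygon v h t x)"
    using euler_polygon_integrable euler_integrable grid by (intro L1_norm_triangle3) auto
  also have "\<dots> \<le> speed T * h + h * (T * L * speed T * exp (L*T) / 4) + speed T * h"
  proof (intro add_mono)
    have "speed T * (t - s) \<le> speed T * h" using cell speed_nonneg[OF T] by (intro mult_left_mono) auto
    then show "L1_norm M (\<lambda>x. euler_polygon v (h/2) t x - euler_polygon v (h/2) s x) \<le> speed T * h"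
      "L1_norm M (\<lambda>x. euler_polygon v h s x - euler_polygon v h t x) \<le> speed T * h"
      using euler_polygon_lipschitz[of "h/2" s t T] euler_polygon_lipschitz[OF h, of s t T] cell t h
        L1_norm_minus_commute[of M "euler_polygon v h s" "euler_polygon v h t"] by auto
    show "L1_norm M (\<lambda>x. euler v (h/2) (2*j) x - euler v h j x) \<le> h * (T * L * speed T * exp (L*T) / 4)"
      using euler_halving_le[OF h, of j T] cell t L1_norm_minus_commute[of M "euler v h j" "euler v (h/2) (2*j)"]
      unfolding s_def by auto
  qed
  finally show ?thesis unfolding halving_const_def by (simp add: algebra_simps)
qed

lemma euler_polygon_dyadic_step:
  assumes "0 \<le> t" "t \<le> T"
  shows "L1_norm M (\<lambda>x. euler_polygon v ((1/2)^Suc k) t x - euler_polygon v ((1/2)^k) t x)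
    \<le> halving_const T * (1/2)^k"
  using euler_polygon_halving[of "(1/2)^k" t T] assms by (simp add: mult_ac)

lemma euler_flow_integrable: "0 \<le> t \<Longrightarrow> integrable M (euler_flow v t)"
  unfolding euler_flow_def
  by (rule L1_limit_geometric(1)[OF euler_polygon_integrable euler_polygon_dyadic_step[of t t]]) auto

lemma euler_polygon_flow_dist:
  assumes "0 \<le> t" "t \<le> T"
  shows "L1_norm M (\<lambda>x. euler_polygon v ((1/2)^k) t x - euler_flow v t x) \<le> 2 * halving_const T * (1/2)^k"
  unfolding euler_flow_def
  by (rule L1_limit_geometric(2)[OF euler_polygon_integrable euler_polygon_dyadic_step[OF assms]])

lemma euler_flow_0: "euler_flow v 0 = v"
proof -
  have "euler_polygon v h 0 = v" for h unfolding euler_polygon_def by simp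
  then show ?thesis unfolding euler_flow_def by (simp add: limI)
qed

lemma euler_flow_lipschitz:
  assumes ab: "0 \<le> a" "a \<le> b" "b \<le> T"
  shows "L1_norm M (\<lambda>x. euler_flow v b x - euler_flow v a x) \<le> speed T * (b - a)"
proof (rule le_if_le_plus_geometric[where D = "4 * halving_const T"])
  fix k :: nat
  let ?h = "(1/2::real)^k"
  have ia: "integrable M (euler_flow v a)" and ib: "integrable M (euler_flow v b)"
    using ab by (auto intro: euler_flow_integrable)
  have "L1_norm M (\<lambda>x. euler_flow v b x - euler_flow v a x)
      \<le> L1_norm M (\<lambda>x. euler_polygon v ?h b x - euler_flow v b x)
      + L1_norm M (\<lambda>x. euler_polygon v ?h b x - euler_polygon v ?h a x)
      + L1_norm M (\<lambda>x. euler_polygon v ?h a x - euler_flow v a x)"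
    using L1_norm_triangle3[of M "\<lambda>x. euler_flow v b x - euler_polygon v ?h b x"
        "\<lambda>x. euler_polygon v ?h b x - euler_polygon v ?h a x" "\<lambda>x. euler_polygon v ?h a x - euler_flow v a x"]
      ia ib euler_polygon_integrable L1_norm_minus_commute[of M "euler_flow v b" "euler_polygon v ?h b"]
    by auto
  also have "\<dots> \<le> 2 * halving_const T * ?h + speed T * (b - a) + 2 * halving_const T * ?h"
    using euler_polygon_flow_dist[of b T k] euler_polygon_flow_dist[of a T k] ab
      euler_polygon_lipschitz[of ?h a b T]
    by (intro add_mono) auto
  finally show "L1_norm M (\<lambda>x. euler_flow v b x - euler_flow v a x) \<le> speed T * (b - a) + 4 * halving_const T * ?h"
    by simp
qed

lemma euler_flow_increment:
  assumes ab: "0 \<le> a" "a \<le> b" "b \<le> T"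
  shows "L1_norm M (\<lambda>x. euler_flow v b x - euler_flow v a x - (b - a) * F (euler_flow v a) x)
    \<le> L * speed T * (b - a)^2"
proof (rule le_if_le_plus_geometric
    [where D = "4 * halving_const T + (b - a) * L * speed T + 2 * (b - a) * L * halving_const T"])
  fix k :: nat
  let ?h = "(1/2::real)^k"
  have ia: "integrable M (euler_flow v a)" and ib: "integrable M (euler_flow v b)"
    using ab by (auto intro: euler_flow_integrable)
  have dist_a: "L1_norm M (\<lambda>x. euler_polygon v ?h a x - euler_flow v a x) \<le> 2 * halving_const T * ?h"
    using euler_polygon_flow_dist[of a T k] ab by simp
  have "L1_norm M (\<lambda>x. euler_flow v b x - euler_flow v a x - (b - a) * F (euler_flow v a) x)
     \<le> L1_norm M (\<lambda>x. euler_polygon v ?h b x - euler_flow v b x)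
      + L1_norm M (\<lambda>x. euler_polygon v ?h b x - euler_polygon v ?h a x - (b - a) * F (euler_polygon v ?h a) x)
      + L1_norm M (\<lambda>x. euler_polygon v ?h a x - euler_flow v a x)
      + L1_norm M (\<lambda>x. (b - a) * (F (euler_polygon v ?h a) x - F (euler_flow v a) x))"
    using L1_norm_triangle4[of M "\<lambda>x. euler_flow v b x - euler_polygon v ?h b x"
        "\<lambda>x. euler_polygon v ?h b x - euler_polygon v ?h a x - (b - a) * F (euler_polygon v ?h a) x"
        "\<lambda>x. euler_polygon v ?h a x - euler_flow v a x"
        "\<lambda>x. (b - a) * (F (euler_polygon v ?h a) x - F (euler_flow v a) x)"]
      ia ib euler_polygon_integrable integrable_F[OF euler_polygon_integrable] integrable_F[OF ia]
      L1_norm_minus_commute[of M "euler_flow v b" "euler_polygon v ?h b"]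
    by (auto simp: algebra_simps)
  also have "\<dots> \<le> 2 * halving_const T * ?h + (b - a) * (L * speed T * (b - a + ?h))
      + 2 * halving_const T * ?h + (b - a) * (L * (2 * halving_const T * ?h))"
  proof (intro add_mono)
    show "L1_norm M (\<lambda>x. euler_polygon v ?h b x - euler_flow v b x) \<le> 2 * halving_const T * ?h"
      using euler_polygon_flow_dist[of b T k] ab by simp
    show "L1_norm M (\<lambda>x. euler_polygon v ?h b x - euler_polygon v ?h a x - (b - a) * F (euler_polygon v ?h a) x)
      \<le> (b - a) * (L * speed T * (b - a + ?h))"
      using ab by (intro euler_polygon_increment) auto
    have "L1_norm M (\<lambda>x. (b - a) * (F (euler_polygon v ?h a) x - F (euler_flow v a) x))
        \<le> \<bar>b - a\<bar> * (L * L1_norm M (\<lambda>x. euler_polygon v ?h a x - euler_flow v a x))"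
      by (intro lipschitz_F_cmult euler_polygon_integrable ia)
    also have "\<dots> \<le> \<bar>b - a\<bar> * (L * (2 * halving_const T * ?h))"
      using dist_a L_nonneg by (intro mult_left_mono) auto
    also have "\<dots> = (b - a) * (L * (2 * halving_const T * ?h))" using ab by simp
    finally show "L1_norm M (\<lambda>x. (b - a) * (F (euler_polygon v ?h a) x - F (euler_flow v a) x))
        \<le> (b - a) * (L * (2 * halving_const T * ?h))" .
  qed (use dist_a in simp)
  finally show "L1_norm M (\<lambda>x. euler_flow v b x - euler_flow v a x - (b - a) * F (euler_flow v a) x)
     \<le> L * speed T * (b - a)^2
       + (4 * halving_const T + (b - a) * L * speed T + 2 * (b - a) * L * halving_const T) * ?h"
    by (simp add: algebra_simps power2_eq_square)
qed

text \<open>For \<open>b < a\<close> the bound follows from the case \<open>a \<le> b\<close> with the roles exchanged,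
  at the price of replacing \<open>F\<close> at \<open>a\<close> by \<open>F\<close> at \<open>b\<close>, which costs another \<open>L speed (a - b)\<^sup>2\<close>.\<close>
lemma euler_flow_second_order:
  assumes ab: "0 \<le> a" "a \<le> T" "0 \<le> b" "b \<le> T"
  shows "L1_norm M (\<lambda>x. euler_flow v b x - euler_flow v a x - (b - a) * F (euler_flow v a) x)
    \<le> 2 * L * speed T * (b - a)^2"
proof (cases "a \<le> b")
  case True
  have "L * speed T * (b - a)^2 \<le> 2 * L * speed T * (b - a)^2"
    using L_nonneg speed_nonneg[of T] ab by simp
  then show ?thesis using euler_flow_increment[of a b T] True ab by simp
next
  case False
  have ia: "integrable M (euler_flow v a)" and ib: "integrable M (euler_flow v b)"
    using ab by (auto intro: euler_flow_integrable)
  have "L1_norm M (\<lambda>x. euler_flow v b x - euler_flow v a x - (b - a) * F (euler_flow v a) x)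
     \<le> L1_norm M (\<lambda>x. euler_flow v a x - euler_flow v b x - (a - b) * F (euler_flow v b) x)
       + L1_norm M (\<lambda>x. (a - b) * (F (euler_flow v a) x - F (euler_flow v b) x))"
  proof -
    have "L1_norm M (\<lambda>x. euler_flow v b x - euler_flow v a x - (b - a) * F (euler_flow v a) x)
      \<le> L1_norm M (\<lambda>x. - (euler_flow v a x - euler_flow v b x - (a - b) * F (euler_flow v b) x))
       + L1_norm M (\<lambda>x. (a - b) * (F (euler_flow v a) x - F (euler_flow v b) x))"
      using ia ib integrable_F[OF ia] integrable_F[OF ib] by (intro L1_norm_triangle) (auto simp: algebra_simps)
    then show ?thesis by (simp only: L1_norm_uminus)
  qed
  also have "\<dots> \<le> L * speed T * (a - b)^2 + (a - b) * (L * (speed T * (a - b)))"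
  proof (intro add_mono)
    show "L1_norm M (\<lambda>x. euler_flow v a x - euler_flow v b x - (a - b) * F (euler_flow v b) x)
        \<le> L * speed T * (a - b)^2"
      using euler_flow_increment[of b a T] False ab by simp
    have "L1_norm M (\<lambda>x. (a - b) * (F (euler_flow v a) x - F (euler_flow v b) x))
        \<le> \<bar>a - b\<bar> * (L * L1_norm M (\<lambda>x. euler_flow v a x - euler_flow v b x))"
      by (intro lipschitz_F_cmult ia ib)
    also have "\<dots> = (a - b) * (L * L1_norm M (\<lambda>x. euler_flow v a x - euler_flow v b x))"
      using False by simp
    also have "\<dots> \<le> (a - b) * (L * (speed T * (a - b)))"
      using euler_flow_lipschitz[of b a T] False ab L_nonneg by (intro mult_left_mono) auto
    finally show "L1_norm M (\<lambda>x. (a - b) * (F (euler_flow v a) x - F (euler_flow v b) x))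
        \<le> (a - b) * (L * (speed T * (a - b)))" .
  qed
  finally show ?thesis by (simp add: algebra_simps power2_eq_square)
qed

end

end

section \<open>Differentiable curves in \<open>L\<^sup>1\<close>\<close>

lemma L1_has_deriv_atI_quadratic:
  assumes ui: "\<And>s. integrable M (u s)" and wi: "integrable M w" and "0 < \<delta>"
    and quadratic: "\<And>h. h \<noteq> 0 \<Longrightarrow> \<bar>h\<bar> < \<delta> \<Longrightarrow> L1_norm M (\<lambda>x. u (t+h) x - u t x - h * w x) \<le> C * h^2"
  shows "L1_has_deriv_at M u w t"
  unfolding L1_has_deriv_at_def
proof (rule tendsto_sandwich[of "\<lambda>_. 0" _ _ "\<lambda>h. ennreal (C * \<bar>h\<bar>)"])
  show "\<forall>\<^sub>F h in at 0. (\<integral>\<^sup>+ x. ennreal \<bar>(u (t + h) x - u t x) / h - w x\<bar> \<partial>M) \<le> ennreal (C * \<bar>h\<bar>)"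
    unfolding eventually_at
  proof (intro exI[of _ \<delta>] conjI \<open>0 < \<delta>\<close> ballI impI)
    fix h :: real assume "h \<noteq> 0 \<and> dist h 0 < \<delta>"
    then have h0: "h \<noteq> 0" and hd: "\<bar>h\<bar> < \<delta>" by auto
    have "L1_norm M (\<lambda>x. (u (t + h) x - u t x) / h - w x)
        = L1_norm M (\<lambda>x. (1/h) * (u (t+h) x - u t x - h * w x))"
      using h0 by (intro L1_norm_cong) (simp add: field_simps)
    also have "\<dots> \<le> \<bar>1/h\<bar> * (C * h^2)"
      unfolding L1_norm_cmult using quadratic[OF h0 hd] by (intro mult_left_mono) auto
    also have "\<dots> = C * \<bar>h\<bar>" using h0 by (simp add: power2_eq_square abs_mult field_simps)
    finally show "(\<integral>\<^sup>+ x. ennreal \<bar>(u (t + h) x - u t x) / h - w x\<bar> \<partial>M) \<le> ennreal (C * \<bar>h\<bar>)"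
      using ui wi by (simp add: nn_integral_abs_eq_L1_norm ennreal_leI)
  qed
  have "((\<lambda>h. ennreal (C * \<bar>h\<bar>)) \<longlongrightarrow> ennreal (C * \<bar>0\<bar>)) (at (0::real))"
    by (intro tendsto_ennrealI tendsto_intros)
  then show "((\<lambda>h. ennreal (C * \<bar>h\<bar>)) \<longlongrightarrow> 0) (at (0::real))" by simp
qed auto

lemma same_sign_near:
  fixes t h :: real
  assumes "\<bar>h\<bar> < (if t = 0 then 1 else \<bar>t\<bar>)"
  shows "0 \<le> t * (t + h)"
  using assms by (cases "t = 0") (auto simp: zero_le_mult_iff abs_less_iff split: if_splits)

text \<open>Near any \<open>t\<close>, both \<open>t\<close> and \<open>t + h\<close> lie on the same side of \<open>0\<close>, so one of the
  two quadratic bounds applies.\<close>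
lemma L1_has_deriv_at_glued:
  fixes p q :: "real \<Rightarrow> 'a \<Rightarrow> real" and F :: "('a \<Rightarrow> real) \<Rightarrow> 'a \<Rightarrow> real"
  defines "u \<equiv> \<lambda>t. if 0 \<le> t then p t else q (- t)"
  assumes pq: "p 0 = q 0"
    and pi: "\<And>t. 0 \<le> t \<Longrightarrow> integrable M (p t)" and qi: "\<And>t. 0 \<le> t \<Longrightarrow> integrable M (q t)"
    and Fi: "\<And>v. integrable M v \<Longrightarrow> integrable M (F v)"
    and p: "\<And>T a b. 0 \<le> a \<Longrightarrow> a \<le> T \<Longrightarrow> 0 \<le> b \<Longrightarrow> b \<le> T \<Longrightarrow>
      L1_norm M (\<lambda>x. p b x - p a x - (b - a) * F (p a) x) \<le> C T * (b - a)^2"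
    and q: "\<And>T a b. 0 \<le> a \<Longrightarrow> a \<le> T \<Longrightarrow> 0 \<le> b \<Longrightarrow> b \<le> T \<Longrightarrow>
      L1_norm M (\<lambda>x. q b x - q a x - (b - a) * - F (q a) x) \<le> C T * (b - a)^2"
  shows "L1_has_deriv_at M u (F (u t)) t"
proof -
  have ui: "integrable M (u s)" for s unfolding u_def using pi qi by auto
  have second_order: "L1_norm M (\<lambda>x. u b x - u a x - (b - a) * F (u a) x) \<le> C T * (b - a)^2"
    if ab: "0 \<le> a * b" "\<bar>a\<bar> \<le> T" "\<bar>b\<bar> \<le> T" for a b T
  proof -
    consider "0 \<le> a" "0 \<le> b" | "a \<le> 0" "b \<le> 0" using ab(1) by (auto simp: zero_le_mult_iff)
    then show ?thesis
    proof cases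
      case 1
      then show ?thesis using p[of a T b] ab unfolding u_def by auto
    next
      case 2
      then have "u a = q (- a)" "u b = q (- b)" unfolding u_def using pq by auto
      then show ?thesis
        using q[of "- a" T "- b"] 2 ab by (simp add: algebra_simps power2_eq_square)
    qed
  qed
  show ?thesis
  proof (rule L1_has_deriv_atI_quadratic[OF ui Fi[OF ui]])
    show "0 < (if t = 0 then 1 else \<bar>t\<bar>)" by simp
    fix h :: real assume "h \<noteq> 0" "\<bar>h\<bar> < (if t = 0 then 1 else \<bar>t\<bar>)"
    then have "0 \<le> t * (t + h)" "\<bar>t\<bar> \<le> 2 * \<bar>t\<bar> + 1" "\<bar>t + h\<bar> \<le> 2 * \<bar>t\<bar> + 1"
      using same_sign_near by (auto split: if_splits)
    from second_order[OF this]
    show "L1_norm M (\<lambda>x. u (t + h) x - u t x - h * F (u t) x) \<le> C (2 * \<bar>t\<bar> + 1) * h^2"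
      by simp
  qed
qed

lemma L1_has_deriv_atD:
  assumes D: "L1_has_deriv_at M u w t" and ui: "\<And>s. integrable M (u s)" and wi: "integrable M w"
    and e: "0 < e"
  shows "\<exists>\<delta>>0. \<forall>h. h \<noteq> 0 \<and> \<bar>h\<bar> < \<delta> \<longrightarrow> L1_norm M (\<lambda>x. u (t+h) x - u t x - h * w x) \<le> e * \<bar>h\<bar>"
proof -
  let ?q = "\<lambda>h. L1_norm M (\<lambda>x. (u (t + h) x - u t x) / h - w x)"
  have "((\<lambda>h. ennreal (?q h)) \<longlongrightarrow> ennreal 0) (at 0)"
    using D ui wi unfolding L1_has_deriv_at_def by (simp add: nn_integral_abs_eq_L1_norm)
  then have "(?q \<longlongrightarrow> 0) (at 0)" by (subst (asm) tendsto_ennreal_iff) (auto simp: L1_norm_nonneg)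
  then have "\<forall>\<^sub>F h in at 0. dist (?q h) 0 < e" using e by (rule tendstoD)
  then obtain \<delta> where d: "\<delta> > 0" "\<forall>h. h \<noteq> 0 \<and> dist h 0 < \<delta> \<longrightarrow> dist (?q h) 0 < e"
    unfolding eventually_at by blast
  show ?thesis
  proof (intro exI[of _ \<delta>] conjI d allI impI)
    fix h :: real assume h: "h \<noteq> 0 \<and> \<bar>h\<bar> < \<delta>"
    have "L1_norm M (\<lambda>x. u (t+h) x - u t x - h * w x) = L1_norm M (\<lambda>x. h * ((u (t + h) x - u t x) / h - w x))"
      using h by (intro L1_norm_cong) (simp add: field_simps)
    also have "\<dots> = \<bar>h\<bar> * ?q h" by (rule L1_norm_cmult)
    also have "\<dots> \<le> \<bar>h\<bar> * e" using d h by (intro mult_left_mono) (auto simp: L1_norm_nonneg)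
    finally show "L1_norm M (\<lambda>x. u (t+h) x - u t x - h * w x) \<le> e * \<bar>h\<bar>" by (simp add: mult.commute)
  qed
qed

lemma L1_has_deriv_at_diff:
  assumes du: "L1_has_deriv_at M u a t" and dv: "L1_has_deriv_at M v b t"
    and [measurable]: "\<And>s. u s \<in> borel_measurable M" "\<And>s. v s \<in> borel_measurable M"
      "a \<in> borel_measurable M" "b \<in> borel_measurable M"
  shows "L1_has_deriv_at M (\<lambda>s x. u s x - v s x) (\<lambda>x. a x - b x) t"
proof -
  let ?A = "\<lambda>h x. \<bar>(u (t + h) x - u t x) / h - a x\<bar>"
  let ?B = "\<lambda>h x. \<bar>(v (t + h) x - v t x) / h - b x\<bar>"
  have "((\<lambda>h. (\<integral>\<^sup>+x. ennreal (?A h x) \<partial>M) + (\<integral>\<^sup>+x. ennreal (?B h x) \<partial>M)) \<longlongrightarrow> 0 + 0) (at 0)"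
    using du dv unfolding L1_has_deriv_at_def by (rule tendsto_add)
  then have lim: "((\<lambda>h. (\<integral>\<^sup>+x. ennreal (?A h x) \<partial>M) + (\<integral>\<^sup>+x. ennreal (?B h x) \<partial>M)) \<longlongrightarrow> 0) (at 0)"
    by simp
  have le: "(\<integral>\<^sup>+x. ennreal \<bar>((u (t + h) x - v (t + h) x) - (u t x - v t x)) / h - (a x - b x)\<bar> \<partial>M)
      \<le> (\<integral>\<^sup>+x. ennreal (?A h x) \<partial>M) + (\<integral>\<^sup>+x. ennreal (?B h x) \<partial>M)" for h
  proof -
    have "\<bar>((u (t + h) x - v (t + h) x) - (u t x - v t x)) / h - (a x - b x)\<bar> \<le> ?A h x + ?B h x" for x
    proof -
      have "((u (t + h) x - v (t + h) x) - (u t x - v t x)) / h - (a x - b x)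
          = ((u (t + h) x - u t x) / h - a x) - ((v (t + h) x - v t x) / h - b x)"
        by (cases "h = 0") (simp_all add: field_simps)
      then show ?thesis by (simp only: abs_triangle_ineq4)
    qed
    then have "(\<integral>\<^sup>+x. ennreal \<bar>((u (t + h) x - v (t + h) x) - (u t x - v t x)) / h - (a x - b x)\<bar> \<partial>M)
        \<le> (\<integral>\<^sup>+x. ennreal (?A h x) + ennreal (?B h x) \<partial>M)"
      by (intro nn_integral_mono) (simp add: ennreal_plus[symmetric] ennreal_leI del: ennreal_plus)
    also have "\<dots> = (\<integral>\<^sup>+x. ennreal (?A h x) \<partial>M) + (\<integral>\<^sup>+x. ennreal (?B h x) \<partial>M)"
      by (rule nn_integral_add) measurable
    finally show ?thesis .
  qed
  show ?thesis
    unfolding L1_has_deriv_at_def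
    by (rule tendsto_sandwich[OF always_eventually always_eventually tendsto_const lim]) (auto intro: le)
qed

lemma L1_has_deriv_at_reflect:
  assumes "L1_has_deriv_at M u w t"
  shows "L1_has_deriv_at M (\<lambda>s. u (- s)) (\<lambda>x. - w x) (- t)"
proof -
  define G where "G h = (\<integral>\<^sup>+ x. ennreal \<bar>(u (t + h) x - u t x) / h - w x\<bar> \<partial>M)" for h
  have "(G \<longlongrightarrow> 0) (filtermap uminus (at 0))"
    using assms unfolding L1_has_deriv_at_def G_def filtermap_at_minus by simp
  then have "((\<lambda>h. G (- h)) \<longlongrightarrow> 0) (at 0)"
    by (simp add: tendsto_compose_filtermap[symmetric] comp_def)
  moreover have "G (- h) = (\<integral>\<^sup>+ x. ennreal \<bar>(u (- (- t + h)) x - u (- (- t)) x) / h - - w x\<bar> \<partial>M)" for h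
  proof -
    have "(u (t + - h) x - u t x) / - h - w x = - ((u (- (- t + h)) x - u (- (- t)) x) / h - - w x)" for x
      by simp
    then have "\<bar>(u (t + - h) x - u t x) / - h - w x\<bar> = \<bar>(u (- (- t + h)) x - u (- (- t)) x) / h - - w x\<bar>" for x
      by (metis abs_minus_cancel)
    then show ?thesis unfolding G_def by simp
  qed
  ultimately show ?thesis unfolding L1_has_deriv_at_def by simp
qed

lemma L1_norm_increment_le:
  assumes D: "L1_has_deriv_at M u w t" and ui: "\<And>s. integrable M (u s)" and wi: "integrable M w"
    and e: "0 < e"
  shows "\<exists>\<delta>>0. \<forall>h. h \<noteq> 0 \<and> \<bar>h\<bar> < \<delta> \<longrightarrow>
           \<bar>L1_norm M (u (t+h)) - L1_norm M (u t)\<bar> \<le> \<bar>h\<bar> * (L1_norm M w + e)"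
proof -
  obtain \<delta> where \<delta>: "\<delta> > 0"
    "\<forall>h. h \<noteq> 0 \<and> \<bar>h\<bar> < \<delta> \<longrightarrow> L1_norm M (\<lambda>x. u (t+h) x - u t x - h * w x) \<le> e * \<bar>h\<bar>"
    using L1_has_deriv_atD[OF D ui wi e] by blast
  have "\<bar>L1_norm M (u (t+h)) - L1_norm M (u t)\<bar> \<le> \<bar>h\<bar> * (L1_norm M w + e)"
    if h: "h \<noteq> 0" "\<bar>h\<bar> < \<delta>" for h
  proof -
    have "\<bar>L1_norm M (u (t+h)) - L1_norm M (u t)\<bar> \<le> L1_norm M (\<lambda>x. u (t+h) x - u t x)"
      using ui[of "t+h"] ui[of t] by (rule abs_L1_norm_diff_le)
    also have "\<dots> \<le> L1_norm M (\<lambda>x. h * w x) + L1_norm M (\<lambda>x. u (t+h) x - u t x - h * w x)"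
      using ui wi by (intro L1_norm_triangle) auto
    also have "\<dots> \<le> \<bar>h\<bar> * L1_norm M w + e * \<bar>h\<bar>"
      using \<delta>(2) h by (simp add: L1_norm_cmult)
    finally show ?thesis by (simp add: algebra_simps)
  qed
  then show ?thesis using \<delta>(1) by blast
qed

lemma L1_gronwall_forward:
  assumes ui: "\<And>s. integrable M (u s)" and wi: "\<And>s. integrable M (w s)"
    and D: "\<And>s. L1_has_deriv_at M u (w s) s"
    and bound: "\<And>s. L1_norm M (w s) \<le> L * L1_norm M (u s)" and L: "0 \<le> L"
    and u0: "L1_norm M (u 0) = 0" and t: "0 \<le> t"
  shows "L1_norm M (u t) = 0"
proof -
  define N where "N s = L1_norm M (u s)" for s
  have incr: "\<exists>\<delta>>0. \<forall>h. h \<noteq> 0 \<and> \<bar>h\<bar> < \<delta> \<longrightarrow> \<bar>N (s+h) - N s\<bar> \<le> \<bar>h\<bar> * (L * N s + e)"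
    if "0 < e" for s e
  proof -
    obtain \<delta> where \<delta>: "\<delta> > 0" "\<forall>h. h \<noteq> 0 \<and> \<bar>h\<bar> < \<delta> \<longrightarrow>
        \<bar>N (s+h) - N s\<bar> \<le> \<bar>h\<bar> * (L1_norm M (w s) + e)"
      using L1_norm_increment_le[OF D[of s] ui wi[of s] \<open>0 < e\<close>] unfolding N_def by blast
    have le: "\<bar>h\<bar> * (L1_norm M (w s) + e) \<le> \<bar>h\<bar> * (L * N s + e)" for h
      using bound[of s] unfolding N_def by (intro mult_left_mono) auto
    show ?thesis
    proof (intro exI[of _ \<delta>] conjI allI impI \<delta>(1))
      fix h :: real assume "h \<noteq> 0 \<and> \<bar>h\<bar> < \<delta>"
      then show "\<bar>N (s+h) - N s\<bar> \<le> \<bar>h\<bar> * (L * N s + e)"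
        using \<delta>(2) le[of h] by (blast intro: order_trans)
    qed
  qed
  have "isCont N s" for s
    using incr[where s=s and e=1] by (auto intro: isCont_if_increment_le)
  then have cont: "continuous_on {0..} N" by (intro continuous_at_imp_continuous_on) auto
  have step: "\<exists>d>0. \<forall>h. 0 < h \<and> h < d \<longrightarrow> N (s+h) \<le> N s * (1 + h*L) + h*e" if "0 < e" for s e
  proof -
    obtain \<delta> where \<delta>: "\<delta> > 0" "\<forall>h. h \<noteq> 0 \<and> \<bar>h\<bar> < \<delta> \<longrightarrow> \<bar>N (s+h) - N s\<bar> \<le> \<bar>h\<bar> * (L * N s + e)"
      using incr[where s=s and e=e] \<open>0 < e\<close> by auto
    have "N (s+h) \<le> N s * (1 + h*L) + h*e" if "0 < h" "h < \<delta>" for h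
    proof -
      have "\<bar>N (s+h) - N s\<bar> \<le> h * (L * N s + e)" using \<delta>(2)[rule_format, of h] that by simp
      then have "N (s+h) - N s \<le> h * (L * N s + e)" by (rule abs_le_D1)
      moreover have "N s * (1 + h*L) + h*e = N s + h * (L * N s + e)" by (simp add: algebra_simps)
      ultimately show ?thesis by linarith
    qed
    then show ?thesis using \<delta>(1) by blast
  qed
  have "N 0 = 0" using u0 unfolding N_def .
  from gronwall_dini_nonpos[OF L this cont step t] have "N t \<le> 0" .
  then show ?thesis using L1_norm_nonneg[of M "u t"] unfolding N_def by linarith
qed

text \<open>Negative times reduce to positive ones by reversing time.\<close>
lemma L1_gronwall:
  assumes ui: "\<And>s. integrable M (u s)" and wi: "\<And>s. integrable M (w s)"
    and D: "\<And>s. L1_has_deriv_at M u (w s) s"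
    and bound: "\<And>s. L1_norm M (w s) \<le> L * L1_norm M (u s)" and L: "0 \<le> L"
    and u0: "L1_norm M (u 0) = 0"
  shows "L1_norm M (u t) = 0"
proof (cases "0 \<le> t")
  case True
  then show ?thesis using L1_gronwall_forward[OF ui wi D bound L u0] by blast
next
  case False
  have D': "L1_has_deriv_at M (\<lambda>s. u (- s)) (\<lambda>x. - w (- s) x) s" for s
    using L1_has_deriv_at_reflect[OF D[of "- s"]] by simp
  have bound': "L1_norm M (\<lambda>x. - w (- s) x) \<le> L * L1_norm M (u (- s))" for s
    using bound[of "- s"] by (simp add: L1_norm_uminus)
  have ui': "integrable M (u (- s))" and wi': "integrable M (\<lambda>x. - w (- s) x)" for s
    using ui wi by auto
  have "L1_norm M (u (- (- t))) = 0"
    by (rule L1_gronwall_forward[where u="\<lambda>s. u (- s)", OF ui' wi' D' bound' L]) (use u0 False in auto)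
  then show ?thesis by simp
qed

section \<open>Global solutions of \<open>u' = F u\<close> in \<open>L\<^sup>1\<close>\<close>

context L1_lipschitz_field
begin

lemma L1_solution_exists:
  assumes v: "integrable M v"
  shows "\<exists>u. u 0 = v \<and> (\<forall>t. integrable M (u t)) \<and> (\<forall>t. L1_has_deriv_at M u (F (u t)) t)"
proof -
  interpret backward: L1_lipschitz_field M "\<lambda>v x. - F v x" L by (rule L1_lipschitz_field_uminus)
  define u where "u t = (if 0 \<le> t then euler_flow v t else backward.euler_flow v (- t))" for t
  define C where "C T = 2 * L * (speed v T + backward.speed v T)" for T
  have "L1_has_deriv_at M u (F (u t)) t" for t
    unfolding u_def[abs_def]
  proof (rule L1_has_deriv_at_glued[where C = C])
    fix T a b :: real assume ab: "0 \<le> a" "a \<le> T" "0 \<le> b" "b \<le> T"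
    then have speeds: "0 \<le> speed v T" "0 \<le> backward.speed v T"
      using speed_nonneg[OF v] backward.speed_nonneg[OF v] by auto
    have "2 * L * speed v T \<le> C T" "2 * L * backward.speed v T \<le> C T"
      unfolding C_def using speeds L_nonneg by (auto intro: mult_left_mono)
    then show "L1_norm M (\<lambda>x. euler_flow v b x - euler_flow v a x - (b - a) * F (euler_flow v a) x)
        \<le> C T * (b - a)^2"
      and "L1_norm M (\<lambda>x. backward.euler_flow v b x - backward.euler_flow v a x
          - (b - a) * - F (backward.euler_flow v a) x) \<le> C T * (b - a)^2"
      using euler_flow_second_order[OF v ab] backward.euler_flow_second_order[OF v ab]
      by (auto elim!: order_trans intro: mult_right_mono)
  qed (use v euler_flow_0 backward.euler_flow_0 euler_flow_integrable backward.euler_flow_integrable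
      integrable_F in auto)
  moreover have "integrable M (u t)" for t
    unfolding u_def using euler_flow_integrable[OF v] backward.euler_flow_integrable[OF v] by auto
  moreover have "u 0 = v" unfolding u_def using euler_flow_0[OF v] by simp
  ultimately show ?thesis by blast
qed

lemma L1_solution_unique:
  assumes ui: "\<And>t. integrable M (u t)" and u': "\<And>t. L1_has_deriv_at M u (F (u t)) t"
    and wi: "\<And>t. integrable M (w t)" and w': "\<And>t. L1_has_deriv_at M w (F (w t)) t"
    and start: "AE x in M. u 0 x = w 0 x"
  shows "AE x in M. u t x = w t x"
proof -
  have [measurable]: "u s \<in> borel_measurable M" "w s \<in> borel_measurable M"
    "F (u s) \<in> borel_measurable M" "F (w s) \<in> borel_measurable M" for s
    using ui wi integrable_F[OF ui] integrable_F[OF wi] by auto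
  have "L1_norm M (\<lambda>x. u t x - w t x) = 0"
  proof (rule L1_gronwall[where w = "\<lambda>s x. F (u s) x - F (w s) x"])
    show "L1_has_deriv_at M (\<lambda>s x. u s x - w s x) (\<lambda>x. F (u s) x - F (w s) x) s" for s
      using u' w' by (intro L1_has_deriv_at_diff) auto
    show "L1_norm M (\<lambda>x. F (u s) x - F (w s) x) \<le> L * L1_norm M (\<lambda>x. u s x - w s x)" for s
      using ui wi by (rule lipschitz_F)
    have "(\<integral>x. \<bar>u 0 x - w 0 x\<bar> \<partial>M) = (\<integral>x. 0 \<partial>M)"
      using start by (intro integral_cong_AE) auto
    then show "L1_norm M (\<lambda>x. u 0 x - w 0 x) = 0" unfolding L1_norm_def by simp
  qed (use ui wi integrable_F[OF ui] integrable_F[OF wi] L_nonneg in auto)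
  then have "AE x in M. u t x - w t x = 0" using ui wi by (intro AE_zero_if_L1_norm_eq_0) auto
  then show ?thesis by auto
qed

end

section \<open>The graphon vector field\<close>

lemma lipschitz_on_pair_abs:
  assumes "L-lipschitz_on UNIV f"
  shows "\<bar>f (a, b) - f (c, d)\<bar> \<le> L * (\<bar>a - c\<bar> + \<bar>b - d\<bar>)"
proof -
  have "\<bar>f (a, b) - f (c, d)\<bar> \<le> L * dist (a, b) (c, d)"
    using lipschitz_onD[OF assms] by (simp add: dist_real_def)
  also have "\<dots> \<le> L * (\<bar>a - c\<bar> + \<bar>b - d\<bar>)"
    using lipschitz_on_nonneg[OF assms] sqrt_sum_squares_le_sum_abs[of "a - c" "b - d"]
    by (intro mult_left_mono) (auto simp: dist_Pair_Pair dist_real_def)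
  finally show ?thesis .
qed

locale graphon_system = prob_space M for M :: "'a measure" +
  fixes W :: "'a \<Rightarrow> 'a \<Rightarrow> real" and f g :: "real \<times> real \<Rightarrow> real" and Lf Lg :: real
  assumes W_measurable[measurable]: "(\<lambda>(x, y). W x y) \<in> borel_measurable (M \<Otimes>\<^sub>M M)"
    and W_bounds: "\<And>x y. 0 \<le> W x y \<and> W x y \<le> 1"
    and lipschitz_f: "Lf-lipschitz_on UNIV f" and lipschitz_g: "Lg-lipschitz_on UNIV g"
begin

definition coupling :: "('a \<Rightarrow> real) \<Rightarrow> 'a \<Rightarrow> real" where
  "coupling v x = (\<integral>y. W x y * g (v x, v y) \<partial>M)"

lemma graphon_rhs_eq: "graphon_rhs M W f g v x = f (v x, coupling v x)"
  unfolding graphon_rhs_def coupling_def ..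

lemma Lf_nonneg: "0 \<le> Lf" using lipschitz_f by (rule lipschitz_on_nonneg)

lemma Lg_nonneg: "0 \<le> Lg" using lipschitz_g by (rule lipschitz_on_nonneg)

lemma f_measurable[measurable]: "f \<in> borel_measurable borel"
  using lipschitz_f by (intro borel_measurable_continuous_onI lipschitz_on_continuous_on)

lemma g_measurable[measurable]: "g \<in> borel_measurable borel"
  using lipschitz_g by (intro borel_measurable_continuous_onI lipschitz_on_continuous_on)

lemma abs_W_mult_le: "\<bar>W x y * c\<bar> \<le> \<bar>c\<bar>"
  using W_bounds[of x y] by (simp add: abs_mult mult_left_le_one_le)

lemma abs_W_mult_g_le: "\<bar>W x y * g (a, b)\<bar> \<le> \<bar>g (0, 0)\<bar> + Lg * \<bar>a\<bar> + Lg * \<bar>b\<bar>"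
  using abs_W_mult_le[of x y "g (a, b)"] lipschitz_on_pair_abs[OF lipschitz_g, of a b 0 0]
  by (simp add: algebra_simps)

lemma integrable_coupling_integrand:
  assumes v: "integrable M v" and x: "x \<in> space M"
  shows "integrable M (\<lambda>y. W x y * g (v x, v y))"
proof (rule Bochner_Integration.integrable_bound)
  have [measurable]: "v \<in> borel_measurable M" using v by auto
  have "(\<lambda>y. (\<lambda>(x, y). W x y) (x, y)) \<in> borel_measurable M" using x by measurable
  then show "(\<lambda>y. W x y * g (v x, v y)) \<in> borel_measurable M" by simp
  show "integrable M (\<lambda>y. \<bar>g (0, 0)\<bar> + Lg * \<bar>v x\<bar> + Lg * \<bar>v y\<bar>)" using v by auto
  show "AE y in M. norm (W x y * g (v x, v y)) \<le> norm (\<bar>g (0, 0)\<bar> + Lg * \<bar>v x\<bar> + Lg * \<bar>v y\<bar>)"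
    using abs_W_mult_g_le Lg_nonneg by (intro AE_I2) simp
qed

lemma coupling_measurable:
  assumes v: "integrable M v"
  shows "coupling v \<in> borel_measurable M"
proof -
  have [measurable]: "v \<in> borel_measurable M" using v by auto
  have "(\<lambda>p. (\<lambda>(x, y). W x y) p * g (v (fst p), v (snd p))) \<in> borel_measurable (M \<Otimes>\<^sub>M M)"
    by measurable
  then have [measurable]: "(\<lambda>(x, y). W x y * g (v x, v y)) \<in> borel_measurable (M \<Otimes>\<^sub>M M)"
    by (simp add: case_prod_beta')
  show ?thesis unfolding coupling_def[abs_def] by measurable
qed

lemma graphon_rhs_measurable:
  assumes v: "integrable M v"
  shows "graphon_rhs M W f g v \<in> borel_measurable M"
proof -
  have [measurable]: "v \<in> borel_measurable M" "coupling v \<in> borel_measurable M"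
    using v coupling_measurable[OF v] by auto
  show ?thesis unfolding graphon_rhs_eq[abs_def] by measurable
qed

lemma abs_coupling_le:
  assumes v: "integrable M v" and x: "x \<in> space M"
  shows "\<bar>coupling v x\<bar> \<le> \<bar>g (0, 0)\<bar> + Lg * \<bar>v x\<bar> + Lg * L1_norm M v"
proof -
  have "\<bar>coupling v x\<bar> \<le> L1_norm M (\<lambda>y. W x y * g (v x, v y))"
    unfolding coupling_def L1_norm_def by (rule integral_abs_bound)
  also have "\<dots> \<le> (\<integral>y. \<bar>g (0, 0)\<bar> + Lg * \<bar>v x\<bar> + Lg * \<bar>v y\<bar> \<partial>M)"
    using v abs_W_mult_g_le by (intro L1_norm_le_integral) auto
  also have "\<dots> = \<bar>g (0, 0)\<bar> + Lg * \<bar>v x\<bar> + Lg * L1_norm M v"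
    using v by (simp add: L1_norm_def prob_space)
  finally show ?thesis .
qed

lemma abs_coupling_diff_le:
  assumes v: "integrable M v" and w: "integrable M w" and x: "x \<in> space M"
  shows "\<bar>coupling v x - coupling w x\<bar> \<le> Lg * \<bar>v x - w x\<bar> + Lg * L1_norm M (\<lambda>y. v y - w y)"
proof -
  have "coupling v x - coupling w x = (\<integral>y. W x y * g (v x, v y) - W x y * g (w x, w y) \<partial>M)"
    unfolding coupling_def
    by (rule Bochner_Integration.integral_diff[symmetric])
      (fact integrable_coupling_integrand[OF v x] integrable_coupling_integrand[OF w x])+
  also have "\<dots> = (\<integral>y. W x y * (g (v x, v y) - g (w x, w y)) \<partial>M)"
    by (simp only: right_diff_distrib)
  finally have "\<bar>coupling v x - coupling w x\<bar> = \<bar>\<integral>y. W x y * (g (v x, v y) - g (w x, w y)) \<partial>M\<bar>"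
    by (rule arg_cong)
  also have "\<dots> \<le> L1_norm M (\<lambda>y. W x y * (g (v x, v y) - g (w x, w y)))"
    unfolding L1_norm_def by (rule integral_abs_bound)
  also have "\<dots> \<le> (\<integral>y. Lg * \<bar>v x - w x\<bar> + Lg * \<bar>v y - w y\<bar> \<partial>M)"
  proof (rule L1_norm_le_integral)
    show "integrable M (\<lambda>y. Lg * \<bar>v x - w x\<bar> + Lg * \<bar>v y - w y\<bar>)" using v w by auto
    fix y
    have "\<bar>W x y * (g (v x, v y) - g (w x, w y))\<bar> \<le> \<bar>g (v x, v y) - g (w x, w y)\<bar>"
      by (rule abs_W_mult_le)
    also have "\<dots> \<le> Lg * (\<bar>v x - w x\<bar> + \<bar>v y - w y\<bar>)" by (rule lipschitz_on_pair_abs[OF lipschitz_g])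
    finally show "\<bar>W x y * (g (v x, v y) - g (w x, w y))\<bar> \<le> Lg * \<bar>v x - w x\<bar> + Lg * \<bar>v y - w y\<bar>"
      by (simp add: algebra_simps)
  qed
  also have "\<dots> = Lg * \<bar>v x - w x\<bar> + Lg * L1_norm M (\<lambda>y. v y - w y)"
    using v w by (simp add: L1_norm_def prob_space)
  finally show ?thesis .
qed

lemma integrable_graphon_rhs:
  assumes v: "integrable M v"
  shows "integrable M (graphon_rhs M W f g v)"
proof (rule Bochner_Integration.integrable_bound)
  let ?c = "\<bar>f (0, 0)\<bar> + Lf * (\<bar>g (0, 0)\<bar> + Lg * L1_norm M v)"
  show "integrable M (\<lambda>x. ?c + Lf * (1 + Lg) * \<bar>v x\<bar>)" using v by auto
  show "graphon_rhs M W f g v \<in> borel_measurable M" by (rule graphon_rhs_measurable[OF v])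
  show "AE x in M. norm (graphon_rhs M W f g v x) \<le> norm (?c + Lf * (1 + Lg) * \<bar>v x\<bar>)"
  proof (rule AE_I2)
    fix x assume x: "x \<in> space M"
    have "\<bar>graphon_rhs M W f g v x\<bar> \<le> \<bar>f (0, 0)\<bar> + Lf * (\<bar>v x\<bar> + \<bar>coupling v x\<bar>)"
    proof -
      have "\<bar>f (v x, coupling v x) - f (0, 0)\<bar> \<le> Lf * (\<bar>v x\<bar> + \<bar>coupling v x\<bar>)"
        using lipschitz_on_pair_abs[OF lipschitz_f, of "v x" "coupling v x" 0 0] by simp
      then show ?thesis unfolding graphon_rhs_eq by linarith
    qed
    also have "\<dots> \<le> \<bar>f (0, 0)\<bar> + Lf * (\<bar>v x\<bar> + (\<bar>g (0, 0)\<bar> + Lg * \<bar>v x\<bar> + Lg * L1_norm M v))"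
      using abs_coupling_le[OF v x] Lf_nonneg by (intro add_left_mono mult_left_mono) auto
    also have "\<dots> = ?c + Lf * (1 + Lg) * \<bar>v x\<bar>" by (simp add: algebra_simps)
    finally show "norm (graphon_rhs M W f g v x) \<le> norm (?c + Lf * (1 + Lg) * \<bar>v x\<bar>)"
      using Lf_nonneg Lg_nonneg L1_norm_nonneg[of M v] by simp
  qed
qed

lemma graphon_rhs_L1_lipschitz:
  assumes v: "integrable M v" and w: "integrable M w"
  shows "L1_norm M (\<lambda>x. graphon_rhs M W f g v x - graphon_rhs M W f g w x)
     \<le> Lf * (1 + 2 * Lg) * L1_norm M (\<lambda>x. v x - w x)"
proof -
  let ?n = "L1_norm M (\<lambda>x. v x - w x)"
  have "L1_norm M (\<lambda>x. graphon_rhs M W f g v x - graphon_rhs M W f g w x)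
      \<le> (\<integral>x. Lf * (1 + Lg) * \<bar>v x - w x\<bar> + Lf * Lg * ?n \<partial>M)"
  proof (rule L1_norm_le_integral)
    show "integrable M (\<lambda>x. Lf * (1 + Lg) * \<bar>v x - w x\<bar> + Lf * Lg * ?n)" using v w by auto
    fix x assume x: "x \<in> space M"
    have "\<bar>graphon_rhs M W f g v x - graphon_rhs M W f g w x\<bar>
        \<le> Lf * (\<bar>v x - w x\<bar> + \<bar>coupling v x - coupling w x\<bar>)"
      unfolding graphon_rhs_eq by (rule lipschitz_on_pair_abs[OF lipschitz_f])
    also have "\<dots> \<le> Lf * (\<bar>v x - w x\<bar> + (Lg * \<bar>v x - w x\<bar> + Lg * ?n))"
      using abs_coupling_diff_le[OF v w x] Lf_nonneg by (intro mult_left_mono) auto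
    finally show "\<bar>graphon_rhs M W f g v x - graphon_rhs M W f g w x\<bar>
        \<le> Lf * (1 + Lg) * \<bar>v x - w x\<bar> + Lf * Lg * ?n"
      by (simp add: algebra_simps)
  qed
  also have "\<dots> = Lf * (1 + 2 * Lg) * ?n"
    using v w by (simp add: L1_norm_def prob_space algebra_simps)
  finally show ?thesis .
qed

lemma L1_lipschitz_field_graphon_rhs: "L1_lipschitz_field M (graphon_rhs M W f g) (Lf * (1 + 2 * Lg))"
proof
  show "0 \<le> Lf * (1 + 2 * Lg)" using Lf_nonneg Lg_nonneg by simp
qed (fact integrable_graphon_rhs graphon_rhs_L1_lipschitz)+

end


theorem lemma3p7:
  fixes M :: "'a measure" and W :: "'a \<Rightarrow> 'a \<Rightarrow> real"
    and f g :: "real \<times> real \<Rightarrow> real" and u0 :: "'a \<Rightarrow> real"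
  assumes "prob_space M"
    and "(\<lambda>(x, y). W x y) \<in> borel_measurable (M \<Otimes>\<^sub>M M)"
    and "\<And>x y. 0 \<le> W x y \<and> W x y \<le> 1"
    and "\<And>x y. W x y = W y x"
    and "\<exists>C. C-lipschitz_on UNIV f"
    and "\<exists>C. C-lipschitz_on UNIV g"
    and "integrable M u0"
  shows "\<exists>u. graphon_L1_solution M W f g u \<and> (AE x in M. u 0 x = u0 x) \<and>
           (\<forall>v. graphon_L1_solution M W f g v \<and> (AE x in M. v 0 x = u0 x)
                \<longrightarrow> (\<forall>t. AE x in M. v t x = u t x))"
proof -
  obtain Lf Lg where "Lf-lipschitz_on UNIV f" "Lg-lipschitz_on UNIV g" using assms(5,6) by blast
  with assms(1-3) interpret graphon_system M W f g Lf Lg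
    unfolding graphon_system_def graphon_system_axioms_def by blast
  interpret L1_lipschitz_field M "graphon_rhs M W f g" "Lf * (1 + 2 * Lg)"
    by (rule L1_lipschitz_field_graphon_rhs)
  obtain u where u: "u 0 = u0" "graphon_L1_solution M W f g u"
    using L1_solution_exists[OF assms(7)] unfolding graphon_L1_solution_def by blast
  have "AE x in M. v t x = u t x"
    if "graphon_L1_solution M W f g v" "AE x in M. v 0 x = u0 x" for v t
    using L1_solution_unique[of v u t] that u unfolding graphon_L1_solution_def by auto
  with u show ?thesis by auto
qed

end
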